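(* Let $\mathcal C$ be a Clifford circuit on $n$ qubits with $m$ Pauli measurements. The set $\mathcal O(\mathcal C)\subseteq\mathbb Z_2^m$ of all outcome bit-strings that occur with nonzero probability for some input state of the circuit is an affine subspace of $\mathbb Z_2^m$. Moreover, $\mathcal O(\mathcal C)$ is exactly the set of $o\in\mathbb Z_2^m$ satisfying all the affine equations in the list $R$ returned by the Outcome-Code Algorithm described in the context.
   Context: A Clifford circuit $\mathcal C$ on $n$ qubits is a finite sequence $(C_1,\dots,C_s)$ of operations, each either a unitary Clifford gate or the measurement of a Hermitian $n$-qubit Pauli operator. Each $C_i$ has a level $\mathrm{level}(C_i)\in\{1,2,\dots\}$; operations of equal level have disjoint supports and $i\le j$ implies $\mathrm{level}(C_i)\le\mathrm{level}(C_j)$. No constraint is placed on the input state. The circuit has $m$ measurements; listed in circuit order, the $j$-th one measures the operator $S_j$. An execution produces an outcome bit-string $o\in\mathbb Z_2^m$, with $o_j=0$ if the measurement of $S_j$ yields eigenvalue $+1$ and $o_j=1$ if it yields $-1$. Outcome-Code Algorithm. Maintain a list $\mathcal S$ of pairs $(T,K_T)$ where $T$ is a Hermitian $n$-qubit Pauli operator with sign $\pm1$ and $K_T\subseteq\{1,\dots,m\}$, initially empty, and a list $R$ of affine equations in $o_1,\dots,o_m$, initially empty. Process $C_1,\dots,C_s$ in order. If $C_i$ is a unitary $U$, replace each $T$ by $UTU^{-1}$ (keeping $K_T$). If $C_i$ is the measurement of $S_j$: (a) if $S_j$ or $-S_j$ lies in the group $\langle\mathcal S\rangle$ generated by the operators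 $T$ in $\mathcal S$, write $\epsilon S_j=\prod_{T\in\mathcal T}T$ with $\mathcal T\subseteq\mathcal S$ and $\epsilon\in\{\pm1\}$, let $K_j$ be the symmetric difference of the sets $K_T$, $T\in\mathcal T$, and add to $R$ the equation $o_j+\sum_{k\in K_j}o_k=0$ if $\epsilon=+1$, respectively $o_j+\sum_{k\in K_j}o_k=1$ if $\epsilon=-1$; (b) otherwise, if some $T\in\mathcal S$ anticommutes with $S_j$, replace every other $T'\in\mathcal S$ that anticommutes with $S_j$ by $(TT',K_T\triangle K_{T'})$ and then remove $(T,K_T)$ from $\mathcal S$; finally (in case (b)) add $(S_j,\{j\})$ to $\mathcal S$. Return $R$. *)

theory Defs
  imports Complex_Main "Jordan_Normal_Form.Schur_Decomposition"
begin

text \<open>Computational basis of n qubits: indices x < 2^n, qubit i of x is bit i of x.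
  pauli_XZ n a b is the tensor product of X^(a i) Z^(b i) over the qubits i < n,
  i.e. it maps the basis vector |c> to (-1)^(b.c) |c xor a>.\<close>

definition pauli_XZ :: "nat \<Rightarrow> (nat \<Rightarrow> bool) \<Rightarrow> (nat \<Rightarrow> bool) \<Rightarrow> complex mat" where
  "pauli_XZ n a b = mat (2^n) (2^n) (\<lambda>(r, c).
     if (\<forall>i<n. bit r i = (bit c i \<noteq> a i))
     then (if even (card {i. i < n \<and> b i \<and> bit c i}) then 1 else -1)
     else 0)"

text \<open>Hermitian n-qubit Pauli operators (with sign +1 or -1):
  +-(i^(a.b)) X^a Z^b, which is the tensor product of I, X, Y = iXZ, Z times a sign.\<close>
definition herm_pauli :: "nat \<Rightarrow> complex mat \<Rightarrow> bool" where
  "herm_pauli n P \<longleftrightarrow> (\<exists>s a b. (s = 1 \<or> s = -1) \<and>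
      P = (s * \<i> ^ card {i. i < n \<and> a i \<and> b i}) \<cdot>\<^sub>m pauli_XZ n a b)"

definition unitary_n :: "nat \<Rightarrow> complex mat \<Rightarrow> bool" where
  "unitary_n n U \<longleftrightarrow> U \<in> carrier_mat (2^n) (2^n) \<and>
      U * mat_adjoint U = 1\<^sub>m (2^n) \<and> mat_adjoint U * U = 1\<^sub>m (2^n)"

definition clifford_gate :: "nat \<Rightarrow> complex mat \<Rightarrow> bool" where
  "clifford_gate n U \<longleftrightarrow> unitary_n n U \<and>
      (\<forall>P. herm_pauli n P \<longrightarrow> herm_pauli n (U * P * mat_adjoint U))"

datatype operation = Gate "complex mat" | Meas "complex mat"

definition clifford_circuit :: "nat \<Rightarrow> operation list \<Rightarrow> bool" where
  "clifford_circuit n C \<longleftrightarrow> (\<forall>op \<in> set C. case op of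
      Gate U \<Rightarrow> clifford_gate n U | Meas S \<Rightarrow> herm_pauli n S)"

fun num_meas :: "operation list \<Rightarrow> nat" where
  "num_meas [] = 0"
| "num_meas (Gate U # C) = num_meas C"
| "num_meas (Meas S # C) = Suc (num_meas C)"

text \<open>Outcome bit-strings in Z_2^m: functions w with w k = False for k >= m.
  Measurements are numbered 0, 1, ..., m-1 in circuit order; w j = True means eigenvalue -1.\<close>
definition bitstrings :: "nat \<Rightarrow> (nat \<Rightarrow> bool) set" where
  "bitstrings m = {w. \<forall>k\<ge>m. \<not> w k}"

definition projector :: "nat \<Rightarrow> complex mat \<Rightarrow> bool \<Rightarrow> complex mat" where
  "projector n S b = (1/2 :: complex) \<cdot>\<^sub>m (1\<^sub>m (2^n) + (if b then -1 else 1) \<cdot>\<^sub>m S)"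

text \<open>Kraus operator of the whole circuit for outcome string w
  (j = index of the next measurement).\<close>
fun kraus :: "nat \<Rightarrow> operation list \<Rightarrow> nat \<Rightarrow> (nat \<Rightarrow> bool) \<Rightarrow> complex mat" where
  "kraus n [] j w = 1\<^sub>m (2^n)"
| "kraus n (Gate U # C) j w = kraus n C j w * U"
| "kraus n (Meas S # C) j w = kraus n C (Suc j) w * projector n S (w j)"

definition vnorm2 :: "complex vec \<Rightarrow> real" where
  "vnorm2 v = (\<Sum>i<dim_vec v. (cmod (v $ i))^2)"

definition outcome_prob :: "nat \<Rightarrow> operation list \<Rightarrow> (nat \<Rightarrow> bool) \<Rightarrow> complex vec \<Rightarrow> real" where
  "outcome_prob n C w psi = vnorm2 (kraus n C 0 w *\<^sub>v psi)"

definition outcome_set :: "nat \<Rightarrow> operation list \<Rightarrow> (nat \<Rightarrow> bool) set" where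
  "outcome_set n C = {w \<in> bitstrings (num_meas C).
      \<exists>psi. psi \<in> carrier_vec (2^n) \<and> vnorm2 psi = 1 \<and> outcome_prob n C w psi \<noteq> 0}"

definition bxor :: "(nat \<Rightarrow> bool) \<Rightarrow> (nat \<Rightarrow> bool) \<Rightarrow> nat \<Rightarrow> bool" where
  "bxor x y = (\<lambda>k. x k \<noteq> y k)"

definition linear_subspace2 :: "nat \<Rightarrow> (nat \<Rightarrow> bool) set \<Rightarrow> bool" where
  "linear_subspace2 m V \<longleftrightarrow> V \<subseteq> bitstrings m \<and> (\<lambda>_. False) \<in> V \<and>
      (\<forall>x\<in>V. \<forall>y\<in>V. bxor x y \<in> V)"

definition affine_subspace2 :: "nat \<Rightarrow> (nat \<Rightarrow> bool) set \<Rightarrow> bool" where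
  "affine_subspace2 m A \<longleftrightarrow> (\<exists>a V. a \<in> bitstrings m \<and> linear_subspace2 m V \<and>
      A = (bxor a) ` V)"

text \<open>An affine equation (K, c) stands for  sum_{k in K} o_k = c  over Z_2.\<close>
definition sat_eq :: "(nat \<Rightarrow> bool) \<Rightarrow> nat set \<times> bool \<Rightarrow> bool" where
  "sat_eq w e \<longleftrightarrow> odd (card {k \<in> fst e. w k}) = snd e"

section \<open>The Outcome-Code Algorithm (nondeterministic choices modelled by a relation)\<close>

inductive_set gen_group :: "nat \<Rightarrow> complex mat list \<Rightarrow> complex mat set" for n Ts where
  one: "1\<^sub>m (2^n) \<in> gen_group n Ts"
| gen: "T \<in> set Ts \<Longrightarrow> T \<in> gen_group n Ts"
| mult: "A \<in> gen_group n Ts \<Longrightarrow> B \<in> gen_group n Ts \<Longrightarrow> A * B \<in> gen_group n Ts"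
| inv: "A \<in> gen_group n Ts \<Longrightarrow> mat_adjoint A \<in> gen_group n Ts"

definition prod_mats :: "nat \<Rightarrow> complex mat list \<Rightarrow> complex mat" where
  "prod_mats n Ts = foldr (*) Ts (1\<^sub>m (2^n))"

definition symdiff_list :: "nat set list \<Rightarrow> nat set" where
  "symdiff_list Ks = foldr (\<lambda>K A. (K - A) \<union> (A - K)) Ks {}"

definition symd :: "nat set \<Rightarrow> nat set \<Rightarrow> nat set" where
  "symd A B = (A - B) \<union> (B - A)"

definition anticommute :: "complex mat \<Rightarrow> complex mat \<Rightarrow> bool" where
  "anticommute A B \<longleftrightarrow> A * B = - (B * A)"

type_synonym alg_state = "(complex mat \<times> nat set) list \<times> (nat set \<times> bool) list \<times> nat"

text \<open>One step; the third component counts measurements processed so far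
  (so the current measurement has index j).\<close>
inductive alg_step :: "nat \<Rightarrow> alg_state \<Rightarrow> operation \<Rightarrow> alg_state \<Rightarrow> bool" for n where
  gate: "alg_step n (SL, R, j) (Gate U)
           (map (\<lambda>(T, K). (U * T * mat_adjoint U, K)) SL, R, j)"
| meas_a: "\<lbrakk> S \<in> gen_group n (map fst SL) \<or> - S \<in> gen_group n (map fst SL);
            \<epsilon> = 1 \<or> \<epsilon> = -1; I \<subseteq> {..<length SL};
            \<epsilon> \<cdot>\<^sub>m S = prod_mats n (map fst (nths SL I)) \<rbrakk> \<Longrightarrow>
          alg_step n (SL, R, j) (Meas S)
            (SL, R @ [(symd {j} (symdiff_list (map snd (nths SL I))), \<epsilon> = -1)], Suc j)"
| meas_b1: "\<lbrakk> \<not> (S \<in> gen_group n (map fst SL) \<or> - S \<in> gen_group n (map fst SL));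
             i < length SL; SL ! i = (T, K); anticommute T S \<rbrakk> \<Longrightarrow>
          alg_step n (SL, R, j) (Meas S)
            (map (\<lambda>(T', K'). if anticommute T' S then (T * T', symd K K') else (T', K'))
                 (take i SL @ drop (Suc i) SL) @ [(S, {j})], R, Suc j)"
| meas_b2: "\<lbrakk> \<not> (S \<in> gen_group n (map fst SL) \<or> - S \<in> gen_group n (map fst SL));
             \<forall>T\<in>set (map fst SL). \<not> anticommute T S \<rbrakk> \<Longrightarrow>
          alg_step n (SL, R, j) (Meas S) (SL @ [(S, {j})], R, Suc j)"

inductive alg_run :: "nat \<Rightarrow> alg_state \<Rightarrow> operation list \<Rightarrow> (nat set \<times> bool) list \<Rightarrow> bool" for n where
  run_nil: "alg_run n (SL, R, j) [] R"
| run_cons: "alg_step n st op st' \<Longrightarrow> alg_run n st' C R \<Longrightarrow> alg_run n st (op # C) R"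

definition outcome_code :: "nat \<Rightarrow> operation list \<Rightarrow> (nat set \<times> bool) list \<Rightarrow> bool" where
  "outcome_code n C R \<longleftrightarrow> alg_run n ([], [], 0) C R"

end

theory Submission
  imports Defs
begin

(*
  For outcomes w and a set K of measurements let \<sigma>\<^sub>K = (-1)^(\<Sum>k\<in>K. w k); the algorithm
  keeps commuting Paulis T labelled by sets K\<^sub>T.

  Soundness: if the Kraus operator of w is nonzero, then on the range of the partial Kraus
  operator every T of the list acts as \<sigma>\<^sub>K\<^sub>T; so a measured S = \<epsilon> T\<^sub>1 ... T\<^sub>r has eigenvalue
  \<epsilon> \<sigma>\<^sub>K there, and the recorded equation must hold.

  Completeness: the product of the factors 1 + \<sigma>\<^sub>K\<^sub>T T is a multiple of the projector onto
  the joint eigenspace. If w satisfies the recorded equations, this product keeps a nonzero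
  trace and stays within the range of the partial Kraus operator: a measurement outside the
  stabilizer group splits the trace evenly between its two outcomes, because its product
  with the stabilizers is traceless.

  Hence the possible outcome strings are exactly the solutions of the recorded affine system,
  and since some outcome string always occurs, they form an affine subspace.
*)

section \<open>Matrix preliminaries\<close>

abbreviation CM :: "nat \<Rightarrow> complex mat set" where
  "CM n \<equiv> carrier_mat (2^n) (2^n)"

definition trace :: "complex mat \<Rightarrow> complex" where
  "trace A = (\<Sum>i<dim_row A. A $$ (i, i))"

lemma smult_smult_mat: "x \<cdot>\<^sub>m (y \<cdot>\<^sub>m (A :: complex mat)) = (x * y) \<cdot>\<^sub>m A"
  by (rule eq_matI) auto

lemma one_smult_mat [simp]: "(1::complex) \<cdot>\<^sub>m A = A"
  by (rule eq_matI) auto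

lemma minus_one_smult_mat: "(-1::complex) \<cdot>\<^sub>m A = - A"
  by (rule eq_matI) auto

lemma uminus_smult_mat: "- (x \<cdot>\<^sub>m (A :: complex mat)) = (- x) \<cdot>\<^sub>m A"
  by (rule eq_matI) auto

lemma smult_uminus_mat: "x \<cdot>\<^sub>m (- A) = (-x) \<cdot>\<^sub>m (A :: complex mat)"
  by (rule eq_matI) auto

text \<open>The associativity and distributivity laws of Jordan_Normal_Form, with side conditions
  stated as dimension equations so that the simplifier can discharge them.\<close>

lemma assoc_mult_mat_dim:
  assumes "dim_col A = dim_row B" "dim_col B = dim_row C"
  shows "(A * B) * C = A * (B * (C :: complex mat))"
  using assms by (intro assoc_mult_mat[of _ "dim_row A" "dim_col A" _ "dim_col B" _ "dim_col C"]) auto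

lemma add_mult_mat_dim:
  assumes "dim_row A = dim_row B" "dim_col A = dim_col B" "dim_col A = dim_row C"
  shows "(A + B) * C = A * C + B * (C :: complex mat)"
  using assms by (intro add_mult_distrib_mat[of _ "dim_row A" "dim_col A" _ _ "dim_col C"]) auto

lemma mult_add_mat_dim:
  assumes "dim_col A = dim_row B" "dim_row B = dim_row C" "dim_col B = dim_col C"
  shows "A * (B + C) = A * B + A * (C :: complex mat)"
  using assms by (intro mult_add_distrib_mat[of _ "dim_row A" "dim_col A" _ "dim_col B"]) auto

lemma mult_smult_mat_dim:
  assumes "dim_col A = dim_row B"
  shows "A * (k \<cdot>\<^sub>m B) = k \<cdot>\<^sub>m (A * (B :: complex mat))"
  using assms by (intro mult_smult_distrib[of _ "dim_row A" "dim_col A" _ "dim_col B"]) auto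

lemma smult_mult_mat_dim:
  assumes "dim_col A = dim_row B"
  shows "(k \<cdot>\<^sub>m A) * B = k \<cdot>\<^sub>m (A * (B :: complex mat))"
  using assms by (intro mult_smult_assoc_mat[of _ "dim_row A" "dim_col A" _ "dim_col B"]) auto

lemma smult_add_mat_dim:
  assumes "dim_row A = dim_row B" "dim_col A = dim_col B"
  shows "k \<cdot>\<^sub>m (A + B) = k \<cdot>\<^sub>m A + k \<cdot>\<^sub>m (B :: complex mat)"
  using assms by (intro add_smult_distrib_left_mat[of _ "dim_row A" "dim_col A"]) auto

lemmas mat_algebra_dim = assoc_mult_mat_dim add_mult_mat_dim mult_add_mat_dim
  mult_smult_mat_dim smult_mult_mat_dim smult_smult_mat

lemma trace_add: "A \<in> carrier_mat N N \<Longrightarrow> B \<in> carrier_mat N N \<Longrightarrow> trace (A + B) = trace A + trace B"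
  unfolding trace_def by (auto simp: sum.distrib intro!: sum.cong)

lemma trace_smult: "A \<in> carrier_mat N N \<Longrightarrow> trace (l \<cdot>\<^sub>m A) = l * trace A"
  unfolding trace_def by (auto simp: sum_distrib_left intro!: sum.cong)

lemma trace_uminus: "A \<in> carrier_mat N N \<Longrightarrow> trace (- A) = - trace A"
  unfolding trace_def by (auto simp: sum_negf[symmetric] intro!: sum.cong)

lemma trace_one: "trace (1\<^sub>m N) = of_nat N"
  unfolding trace_def by simp

lemma trace_zero: "trace (0\<^sub>m N N) = 0"
  unfolding trace_def by simp

lemma trace_mult_comm:
  assumes "A \<in> carrier_mat N N" "B \<in> carrier_mat N N"
  shows "trace (A * B) = trace (B * A)"
proof -
  have "trace (A * B) = (\<Sum>i<N. \<Sum>k<N. A $$ (i, k) * B $$ (k, i))"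
    using assms unfolding trace_def by (auto simp: scalar_prod_def atLeast0LessThan intro!: sum.cong)
  also have "\<dots> = (\<Sum>k<N. \<Sum>i<N. B $$ (k, i) * A $$ (i, k))"
    by (subst sum.swap) (simp add: ac_simps)
  also have "\<dots> = trace (B * A)"
    using assms unfolding trace_def by (auto simp: scalar_prod_def atLeast0LessThan intro!: sum.cong)
  finally show ?thesis .
qed

lemma mat_adjoint_dim [simp]:
  "dim_row (mat_adjoint A) = dim_col A" "dim_col (mat_adjoint A) = dim_row A"
  unfolding mat_adjoint_def by auto

lemma mat_adjoint_carrier [simp]: "A \<in> carrier_mat N M \<Longrightarrow> mat_adjoint A \<in> carrier_mat M N"
  unfolding carrier_mat_def by auto

lemma mat_adjoint_index:
  "i < dim_col A \<Longrightarrow> j < dim_row A \<Longrightarrow> mat_adjoint A $$ (i, j) = cnj (A $$ (j, i))"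
  unfolding mat_adjoint_def by (simp add: mat_of_rows_index)

lemma mat_adjoint_mult:
  fixes A B :: "complex mat"
  assumes "A \<in> carrier_mat N N" "B \<in> carrier_mat N N"
  shows "mat_adjoint (A * B) = mat_adjoint B * mat_adjoint A"
  using assms by (intro eq_matI)
    (auto simp: mat_adjoint_index scalar_prod_def ac_simps intro!: sum.cong)

lemma mat_adjoint_one: "mat_adjoint (1\<^sub>m N :: complex mat) = 1\<^sub>m N"
  by (rule eq_matI) (auto simp: mat_adjoint_index)

lemma mat_adjoint_smult: "mat_adjoint (l \<cdot>\<^sub>m A) = cnj l \<cdot>\<^sub>m mat_adjoint (A :: complex mat)"
  by (rule eq_matI) (auto simp: mat_adjoint_index)

lemma mult_left_commute_mat:
  assumes "A \<in> CM n" "B \<in> CM n" "C \<in> CM n" "A * B = B * A"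
  shows "B * (A * C) = A * (B * C)"
proof -
  note dims = carrier_matD[OF assms(1)] carrier_matD[OF assms(2)] carrier_matD[OF assms(3)]
  have "B * (A * C) = (B * A) * C" using dims by (simp add: assoc_mult_mat_dim)
  also have "\<dots> = (A * B) * C" using assms(4) by simp
  also have "\<dots> = A * (B * C)" using dims by (simp add: assoc_mult_mat_dim)
  finally show ?thesis .
qed

lemma commute_mult_mat:
  assumes "X \<in> CM n" "A \<in> CM n" "B \<in> CM n" "X * A = A * X" "X * B = B * X"
  shows "X * (A * B) = (A * B) * X"
proof -
  note dims = carrier_matD[OF assms(1)] carrier_matD[OF assms(2)] carrier_matD[OF assms(3)]
  have "X * (A * B) = A * (X * B)" using dims assms(4) by (simp flip: assoc_mult_mat_dim)
  also have "\<dots> = (A * B) * X" using dims assms(5) by (simp add: assoc_mult_mat_dim)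
  finally show ?thesis .
qed

lemma unitary_carrier: "unitary_n n U \<Longrightarrow> U \<in> CM n \<and> mat_adjoint U \<in> CM n"
  unfolding unitary_n_def by simp

lemma unitary_adjoint_cancel:
  assumes "unitary_n n U" "dim_row X = 2^n"
  shows "mat_adjoint U * (U * X) = X"
proof -
  have U: "U \<in> CM n" "mat_adjoint U * U = 1\<^sub>m (2^n)" using assms(1) unfolding unitary_n_def by auto
  have "mat_adjoint U * (U * X) = (mat_adjoint U * U) * X"
    using carrier_matD[OF U(1)] assms(2) by (simp add: assoc_mult_mat_dim)
  thus ?thesis using U(2) assms(2) by simp
qed

section \<open>Pauli operators\<close>

definition parity_sign :: "'a set \<Rightarrow> complex" where
  "parity_sign A = (-1) ^ card A"

lemma card_sym_diff_add_card_Int: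
  assumes "finite A" "finite B"
  shows "card (sym_diff A B) + 2 * card (A \<inter> B) = card A + card B"
proof -
  have "sym_diff A B = (A \<union> B) - (A \<inter> B)" by blast
  hence "card (sym_diff A B) = card (A \<union> B) - card (A \<inter> B)"
    using assms by (auto intro: card_Diff_subset)
  moreover have "card (A \<inter> B) \<le> card (A \<union> B)" using assms by (intro card_mono) auto
  ultimately show ?thesis using card_Un_Int[OF assms] by linarith
qed

lemma parity_sign_sym_diff:
  assumes "finite A" "finite B"
  shows "parity_sign (sym_diff A B) = parity_sign A * parity_sign B"
proof -
  have "parity_sign A * parity_sign B = (-1) ^ (card (sym_diff A B) + 2 * card (A \<inter> B))"
    unfolding parity_sign_def card_sym_diff_add_card_Int[OF assms] by (simp add: power_add)
  thus ?thesis unfolding parity_sign_def by (simp add: power_add power_mult)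
qed

lemma parity_sign_square [simp]: "parity_sign A * parity_sign A = 1"
  unfolding parity_sign_def by (simp flip: power_add)

lemma parity_sign_cases: "parity_sign A = 1 \<or> parity_sign A = -1"
  unfolding parity_sign_def by (cases "even (card A)") auto

lemma cnj_parity_sign [simp]: "cnj (parity_sign A) = parity_sign A"
  unfolding parity_sign_def by simp

fun flip_bits :: "(nat \<Rightarrow> bool) \<Rightarrow> nat \<Rightarrow> nat \<Rightarrow> nat" where
  "flip_bits a 0 c = c"
| "flip_bits a (Suc i) c = (if a i then flip_bit i (flip_bits a i c) else flip_bits a i c)"

lemma bit_flip_bits: "bit (flip_bits a m c) i \<longleftrightarrow> (bit c i \<noteq> (i < m \<and> a i))"
  by (induction m) (auto simp: bit_flip_bit_iff less_Suc_eq)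

lemma nat_less_two_power_iff_bits: "(x::nat) < 2^n \<longleftrightarrow> (\<forall>i\<ge>n. \<not> bit x i)"
proof
  assume x: "x < 2^n"
  show "\<forall>i\<ge>n. \<not> bit x i"
  proof (intro allI impI)
    fix i assume "n \<le> i"
    hence "x < 2^i" using x by (meson less_le_trans one_less_numeral_iff power_increasing_iff semiring_norm(76))
    thus "\<not> bit x i" by (simp add: bit_nat_def)
  qed
next
  assume "\<forall>i\<ge>n. \<not> bit x i"
  hence "take_bit n x = x" by (intro bit_eqI) (auto simp: bit_take_bit_iff not_le)
  thus "x < 2^n" by (simp add: take_bit_nat_eq_self_iff)
qed

lemma nat_eqI_low_bits:
  assumes "(r::nat) < 2^n" "c < 2^n" "\<forall>i<n. bit r i = bit c i"
  shows "r = c"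
  using assms unfolding nat_less_two_power_iff_bits by (intro bit_eqI) (metis not_le)

lemma flip_bits_less: "c < 2^n \<Longrightarrow> flip_bits a n c < 2^n"
  unfolding nat_less_two_power_iff_bits by (auto simp: bit_flip_bits)

lemma pauli_XZ_carrier [simp]: "pauli_XZ n a b \<in> CM n"
  unfolding pauli_XZ_def by auto

lemma pauli_XZ_dim [simp]: "dim_row (pauli_XZ n a b) = 2^n" "dim_col (pauli_XZ n a b) = 2^n"
  unfolding pauli_XZ_def by auto

lemma pauli_XZ_index:
  "r < 2^n \<Longrightarrow> c < 2^n \<Longrightarrow> pauli_XZ n a b $$ (r, c) =
     (if \<forall>i<n. bit r i = (bit c i \<noteq> a i) then parity_sign {i. i < n \<and> b i \<and> bit c i} else 0)"
  unfolding pauli_XZ_def parity_sign_def by (simp add: minus_one_power_iff)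

lemma pauli_XZ_mult:
  "pauli_XZ n a b * pauli_XZ n a' b' =
     parity_sign {i. i < n \<and> b i \<and> a' i} \<cdot>\<^sub>m pauli_XZ n (\<lambda>i. a i \<noteq> a' i) (\<lambda>i. b i \<noteq> b' i)"
  (is "?A * ?B = ?s \<cdot>\<^sub>m ?C")
proof (rule eq_matI)
  fix r c assume "r < dim_row (?s \<cdot>\<^sub>m ?C)" "c < dim_col (?s \<cdot>\<^sub>m ?C)"
  hence r: "r < 2^n" and c: "c < 2^n" by auto
  define k0 where "k0 = flip_bits a' n c"
  have k0: "k0 < 2^n" unfolding k0_def using flip_bits_less[OF c] .
  have bit_k0: "\<forall>i<n. bit k0 i = (bit c i \<noteq> a' i)" unfolding k0_def by (simp add: bit_flip_bits)
  have B_zero: "?B $$ (k, c) = 0" if "k < 2^n" "k \<noteq> k0" for k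
    using that c k0 bit_k0 nat_eqI_low_bits[of k n k0] by (auto simp: pauli_XZ_index)
  have "(?A * ?B) $$ (r, c) = (\<Sum>k\<in>{0..<2^n}. ?A $$ (r, k) * ?B $$ (k, c))"
    using r c by (simp add: scalar_prod_def)
  also have "\<dots> = ?A $$ (r, k0) * ?B $$ (k0, c)"
    using k0 B_zero by (subst sum.mono_neutral_right[of _ "{k0}"]) auto
  also have "\<dots> = (?s \<cdot>\<^sub>m ?C) $$ (r, c)"
  proof -
    define cond where "cond = (\<forall>i<n. bit r i = (bit c i \<noteq> (a i \<noteq> a' i)))"
    define s1 where "s1 = parity_sign {i. i < n \<and> b i \<and> bit c i}"
    define s3 where "s3 = parity_sign {i. i < n \<and> b' i \<and> bit c i}"
    have "{i. i < n \<and> b i \<and> bit k0 i} = sym_diff {i. i < n \<and> b i \<and> bit c i} {i. i < n \<and> b i \<and> a' i}"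
      using bit_k0 by auto
    moreover have "(\<forall>i<n. bit r i = (bit k0 i \<noteq> a i)) = cond" unfolding cond_def using bit_k0 by auto
    ultimately have A: "?A $$ (r, k0) = (if cond then s1 * ?s else 0)"
      unfolding pauli_XZ_index[OF r k0] s1_def by (simp add: parity_sign_sym_diff)
    have B: "?B $$ (k0, c) = s3"
      unfolding pauli_XZ_index[OF k0 c] s3_def using bit_k0 by simp
    have "{i. i < n \<and> (b i \<noteq> b' i) \<and> bit c i} = sym_diff {i. i < n \<and> b i \<and> bit c i} {i. i < n \<and> b' i \<and> bit c i}"
      by auto
    hence C: "?C $$ (r, c) = (if cond then s1 * s3 else 0)"
      unfolding pauli_XZ_index[OF r c] cond_def[symmetric] s1_def s3_def by (simp add: parity_sign_sym_diff)
    show ?thesis using r c C unfolding A B by simp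
  qed
  finally show "(?A * ?B) $$ (r, c) = (?s \<cdot>\<^sub>m ?C) $$ (r, c)" .
qed auto

lemma smult_pauli_XZ_mult:
  "(l \<cdot>\<^sub>m pauli_XZ n a b) * (l' \<cdot>\<^sub>m pauli_XZ n a' b') =
     (l * l' * parity_sign {i. i < n \<and> b i \<and> a' i}) \<cdot>\<^sub>m pauli_XZ n (\<lambda>i. a i \<noteq> a' i) (\<lambda>i. b i \<noteq> b' i)"
  by (simp add: mat_algebra_dim pauli_XZ_mult ac_simps)

lemma pauli_XZ_zero_eq_one:
  assumes "\<forall>i<n. \<not> a i \<and> \<not> b i"
  shows "pauli_XZ n a b = 1\<^sub>m (2^n)"
proof (rule eq_matI)
  fix r c assume "r < dim_row (1\<^sub>m (2^n) :: complex mat)" "c < dim_col (1\<^sub>m (2^n) :: complex mat)"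
  hence r: "r < 2^n" and c: "c < 2^n" by auto
  have cond: "(\<forall>i<n. bit r i = (bit c i \<noteq> a i)) = (r = c)"
    using assms nat_eqI_low_bits[OF r c] by auto
  have sign: "{i. i < n \<and> b i \<and> bit c i} = {}" using assms by auto
  show "pauli_XZ n a b $$ (r, c) = 1\<^sub>m (2^n) $$ (r, c)"
    unfolding pauli_XZ_index[OF r c] cond sign using r c by (simp add: parity_sign_def)
qed auto

lemma pauli_XZ_self_mult: "pauli_XZ n a b * pauli_XZ n a b = parity_sign {i. i < n \<and> a i \<and> b i} \<cdot>\<^sub>m 1\<^sub>m (2^n)"
proof -
  have "{i. i < n \<and> b i \<and> a i} = {i. i < n \<and> a i \<and> b i}" by auto
  thus ?thesis by (simp add: pauli_XZ_mult pauli_XZ_zero_eq_one)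
qed

text \<open>Off the identity, either a bit flip kills the diagonal, or a phase flip on some qubit
  pairs up diagonal entries of opposite sign.\<close>
lemma trace_pauli_XZ:
  assumes "\<exists>i<n. a i \<or> b i"
  shows "trace (pauli_XZ n a b) = 0"
proof (cases "\<exists>i<n. a i")
  case True
  then obtain i0 where "i0 < n" "a i0" by auto
  hence "pauli_XZ n a b $$ (c, c) = 0" if "c < 2^n" for c
    using that by (auto simp: pauli_XZ_index)
  thus ?thesis unfolding trace_def by simp
next
  case False
  then obtain i0 where i0: "i0 < n" "b i0" using assms by auto
  define f :: "nat \<Rightarrow> complex" where "f c = parity_sign {i. i < n \<and> b i \<and> bit c i}" for c
  have diag: "pauli_XZ n a b $$ (c, c) = f c" if "c < 2^n" for c
    using False that unfolding f_def by (auto simp: pauli_XZ_index)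
  define g where "g c = flip_bit i0 c" for c :: nat
  have bit_g: "bit (g c) i = ((i0 = i) \<noteq> bit c i)" for c i unfolding g_def by (auto simp: bit_flip_bit_iff)
  have gg: "g (g c) = c" for c by (rule bit_eqI) (auto simp: bit_g)
  have g_less: "g c < 2^n" if "c < 2^n" for c
    using that i0 bit_g unfolding nat_less_two_power_iff_bits by auto
  have fg: "f (g c) = - f c" for c
  proof -
    have "{i. i < n \<and> b i \<and> bit (g c) i} = sym_diff {i. i < n \<and> b i \<and> bit c i} {i0}"
      using i0 by (auto simp: bit_g)
    hence "f (g c) = f c * parity_sign {i0}" unfolding f_def by (simp add: parity_sign_sym_diff)
    thus ?thesis by (simp add: parity_sign_def)
  qed
  have "(\<Sum>c<2^n. f c) = (\<Sum>c<2^n. f (g c))"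
    by (rule sum.reindex_bij_witness[of _ g g]) (auto simp: gg g_less)
  also have "\<dots> = - (\<Sum>c<2^n. f c)" by (simp add: fg sum_negf)
  finally show ?thesis unfolding trace_def using diag by simp
qed

lemma pauli_XZ_adjoint:
  "mat_adjoint (pauli_XZ n a b) = parity_sign {i. i < n \<and> a i \<and> b i} \<cdot>\<^sub>m pauli_XZ n a b"
proof (rule eq_matI)
  fix r c assume "r < dim_row (parity_sign {i. i < n \<and> a i \<and> b i} \<cdot>\<^sub>m pauli_XZ n a b)"
    "c < dim_col (parity_sign {i. i < n \<and> a i \<and> b i} \<cdot>\<^sub>m pauli_XZ n a b)"
  hence r: "r < 2^n" and c: "c < 2^n" by auto
  define cond where "cond = (\<forall>i<n. bit r i = (bit c i \<noteq> a i))"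
  have cond': "(\<forall>i<n. bit c i = (bit r i \<noteq> a i)) = cond" unfolding cond_def by auto
  have "mat_adjoint (pauli_XZ n a b) $$ (r, c) = cnj (pauli_XZ n a b $$ (c, r))"
    using r c by (simp add: mat_adjoint_index)
  also have "\<dots> = (if cond then parity_sign {i. i < n \<and> b i \<and> bit r i} else 0)"
    unfolding pauli_XZ_index[OF c r] cond' by simp
  also have "\<dots> = parity_sign {i. i < n \<and> a i \<and> b i} * pauli_XZ n a b $$ (r, c)"
  proof -
    have "cond \<Longrightarrow> {i. i < n \<and> b i \<and> bit r i} =
        sym_diff {i. i < n \<and> b i \<and> bit c i} {i. i < n \<and> a i \<and> b i}"
      unfolding cond_def by auto
    thus ?thesis unfolding pauli_XZ_index[OF r c] cond_def[symmetric]
      by (simp add: parity_sign_sym_diff mult.commute)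
  qed
  finally show "mat_adjoint (pauli_XZ n a b) $$ (r, c) = (parity_sign {i. i < n \<and> a i \<and> b i} \<cdot>\<^sub>m pauli_XZ n a b) $$ (r, c)"
    using r c by simp
qed auto

definition scaled_pauli :: "nat \<Rightarrow> complex mat \<Rightarrow> bool" where
  "scaled_pauli n X \<longleftrightarrow> (\<exists>l a b. X = l \<cdot>\<^sub>m pauli_XZ n a b)"

lemma scaled_pauli_carrier: "scaled_pauli n X \<Longrightarrow> X \<in> CM n"
  unfolding scaled_pauli_def by auto

lemma scaled_pauli_mult: "scaled_pauli n X \<Longrightarrow> scaled_pauli n Y \<Longrightarrow> scaled_pauli n (X * Y)"
  unfolding scaled_pauli_def by (clarsimp simp: smult_pauli_XZ_mult) blast

lemma trace_scaled_pauli: "scaled_pauli n X \<Longrightarrow> trace X = 0 \<or> (\<exists>l. X = l \<cdot>\<^sub>m 1\<^sub>m (2^n))"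
  unfolding scaled_pauli_def
  by (metis pauli_XZ_carrier pauli_XZ_zero_eq_one trace_pauli_XZ trace_smult mult_zero_right)

lemma herm_pauli_scaled: "herm_pauli n P \<Longrightarrow> scaled_pauli n P"
  unfolding herm_pauli_def scaled_pauli_def by blast

lemma herm_pauli_carrier: "herm_pauli n P \<Longrightarrow> P \<in> CM n"
  using herm_pauli_scaled scaled_pauli_carrier by blast

lemma i_power_mult_self: "\<i> ^ k * \<i> ^ k = (-1) ^ k"
  by (simp flip: power_mult_distrib)

lemma minus_one_power_mult_self: "(-1 :: complex) ^ k * (-1) ^ k = 1"
  by (simp flip: power_mult_distrib)

lemma scaled_pauli_square:
  "(l \<cdot>\<^sub>m pauli_XZ n a b) * (l \<cdot>\<^sub>m pauli_XZ n a b) =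
     (l * l * (-1) ^ card {i. i < n \<and> a i \<and> b i}) \<cdot>\<^sub>m 1\<^sub>m (2^n)"
  by (simp add: mat_algebra_dim pauli_XZ_self_mult parity_sign_def ac_simps)

lemma herm_pauli_square: "herm_pauli n P \<Longrightarrow> P * P = 1\<^sub>m (2^n)"
proof -
  assume "herm_pauli n P"
  then obtain s a b where s: "s = 1 \<or> s = -1"
    and P: "P = (s * \<i> ^ card {i. i < n \<and> a i \<and> b i}) \<cdot>\<^sub>m pauli_XZ n a b"
    unfolding herm_pauli_def by blast
  define k where "k = card {i. i < n \<and> a i \<and> b i}"
  have "s * \<i> ^ k * (s * \<i> ^ k) * (-1) ^ k = (s * s) * (\<i> ^ k * \<i> ^ k) * (-1) ^ k"
    by (simp only: ac_simps)
  also have "\<dots> = 1" using s by (auto simp: i_power_mult_self minus_one_power_mult_self)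
  finally show ?thesis unfolding P scaled_pauli_square k_def[symmetric] by simp
qed

lemma scaled_pauli_square_one_imp_herm_pauli:
  assumes "scaled_pauli n X" "X * X = 1\<^sub>m (2^n)"
  shows "herm_pauli n X"
proof -
  obtain l a b where X: "X = l \<cdot>\<^sub>m pauli_XZ n a b" using assms(1) unfolding scaled_pauli_def by auto
  define c where "c = \<i> ^ card {i. i < n \<and> a i \<and> b i}"
  have "((l * l * (-1) ^ card {i. i < n \<and> a i \<and> b i}) \<cdot>\<^sub>m 1\<^sub>m (2^n)) $$ (0, 0) =
      (1\<^sub>m (2^n) :: complex mat) $$ (0, 0)"
    using assms(2) unfolding X scaled_pauli_square by simp
  hence "l * l * (c * c) = 1" unfolding c_def i_power_mult_self by simp
  hence "(l * c)\<^sup>2 = 1" by (simp add: power2_eq_square ac_simps)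
  hence lc: "l * c = 1 \<or> l * c = -1" by (simp add: power2_eq_1_iff)
  have cc: "c * c * (c * c) = 1" unfolding c_def i_power_mult_self minus_one_power_mult_self ..
  have c2: "c * c = 1 \<or> c * c = -1" unfolding c_def i_power_mult_self by (simp add: minus_one_power_iff)
  have "l = (l * c * (c * c)) * c"
    using cc by (metis mult.assoc mult.commute mult_1_right)
  hence "\<exists>s. (s = 1 \<or> s = -1) \<and> l = s * c"
    using lc c2 by (intro exI[of _ "l * c * (c * c)"]) auto
  thus ?thesis unfolding herm_pauli_def X c_def by blast
qed

lemma herm_pauli_commute_or_anticommute:
  assumes "herm_pauli n P" "herm_pauli n Q"
  shows "P * Q = Q * P \<or> P * Q = - (Q * P)"
proof -
  obtain l a b where P: "P = l \<cdot>\<^sub>m pauli_XZ n a b"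
    using assms(1) herm_pauli_scaled unfolding scaled_pauli_def by blast
  obtain l' a' b' where Q: "Q = l' \<cdot>\<^sub>m pauli_XZ n a' b'"
    using assms(2) herm_pauli_scaled unfolding scaled_pauli_def by blast
  have "(\<lambda>i. a' i \<noteq> a i) = (\<lambda>i. a i \<noteq> a' i)" "(\<lambda>i. b' i \<noteq> b i) = (\<lambda>i. b i \<noteq> b' i)" by auto
  thus ?thesis
    unfolding P Q smult_pauli_XZ_mult uminus_smult_mat
    using parity_sign_cases[of "{i. i < n \<and> b i \<and> a' i}"] parity_sign_cases[of "{i. i < n \<and> b' i \<and> a i}"]
    by (auto simp: ac_simps)
qed

lemma herm_pauli_commute_if_not_anticommute:
  "herm_pauli n P \<Longrightarrow> herm_pauli n Q \<Longrightarrow> \<not> anticommute P Q \<Longrightarrow> P * Q = Q * P"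
  using herm_pauli_commute_or_anticommute unfolding anticommute_def by blast

lemma herm_pauli_adjoint: "herm_pauli n P \<Longrightarrow> mat_adjoint P = P"
proof -
  assume "herm_pauli n P"
  then obtain s a b where s: "s = 1 \<or> s = -1"
    and P: "P = (s * \<i> ^ card {i. i < n \<and> a i \<and> b i}) \<cdot>\<^sub>m pauli_XZ n a b"
    unfolding herm_pauli_def by blast
  define k where "k = card {i. i < n \<and> a i \<and> b i}"
  have "cnj (\<i> ^ k) = (-1) ^ k * \<i> ^ k"
    by (simp add: power_mult_distrib flip: power_minus)
  hence "cnj (s * \<i> ^ k) * (-1) ^ k = s * \<i> ^ k"
    using s by (auto simp: ac_simps minus_one_power_mult_self)
  thus ?thesis
    unfolding P mat_adjoint_smult pauli_XZ_adjoint smult_smult_mat parity_sign_def k_def[symmetric] by simp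
qed

lemma herm_pauli_mult:
  assumes P: "herm_pauli n P" and Q: "herm_pauli n Q" and PQ: "P * Q = Q * P"
  shows "herm_pauli n (P * Q)"
proof (rule scaled_pauli_square_one_imp_herm_pauli)
  show "scaled_pauli n (P * Q)" using scaled_pauli_mult herm_pauli_scaled P Q by blast
  have Pc: "P \<in> CM n" and Qc: "Q \<in> CM n" using P Q herm_pauli_carrier by auto
  have "(P * Q) * (P * Q) = P * ((Q * P) * Q)" using Pc Qc by (simp add: mat_algebra_dim)
  also have "\<dots> = (P * P) * (Q * Q)" unfolding PQ[symmetric] using Pc Qc by (simp add: mat_algebra_dim)
  finally show "(P * Q) * (P * Q) = 1\<^sub>m (2^n)" using herm_pauli_square[OF P] herm_pauli_square[OF Q] by simp
qed

lemma prod_mats_Nil [simp]: "prod_mats n [] = 1\<^sub>m (2^n)"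
  unfolding prod_mats_def by simp

lemma prod_mats_Cons [simp]: "prod_mats n (A # L) = A * prod_mats n L"
  unfolding prod_mats_def by simp

lemma prod_mats_carrier: "\<forall>A\<in>set L. A \<in> CM n \<Longrightarrow> prod_mats n L \<in> CM n"
  by (induction L) auto

lemma prod_mats_append:
  "\<forall>A\<in>set L1. A \<in> CM n \<Longrightarrow> \<forall>A\<in>set L2. A \<in> CM n \<Longrightarrow>
    prod_mats n (L1 @ L2) = prod_mats n L1 * prod_mats n L2"
proof (induction L1)
  case Nil thus ?case using prod_mats_carrier[of L2 n] by simp
next
  case (Cons A L1)
  hence "A \<in> CM n" by simp
  with Cons show ?case using carrier_matD[of A] carrier_matD[OF prod_mats_carrier[of L1 n]] carrier_matD[OF prod_mats_carrier[of L2 n]]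
    by (simp add: mat_algebra_dim)
qed

lemma commute_prod_mats:
  assumes "X \<in> CM n" "\<forall>A\<in>set L. A \<in> CM n \<and> X * A = A * X"
  shows "X * prod_mats n L = prod_mats n L * X"
  using assms(2)
proof (induction L)
  case Nil thus ?case using assms(1) by simp
next
  case (Cons A L)
  have A: "A \<in> CM n" and XA: "X * A = A * X" using Cons.prems by auto
  have L: "prod_mats n L \<in> CM n" using Cons.prems prod_mats_carrier[of L n] by auto
  have "X * prod_mats n (A # L) = A * (X * prod_mats n L)"
    using mult_left_commute_mat[OF A assms(1) L] XA by simp
  also have "\<dots> = prod_mats n (A # L) * X"
    using Cons carrier_matD[OF A] carrier_matD[OF L] carrier_matD[OF assms(1)] by (simp add: mat_algebra_dim)
  finally show ?case .
qed

definition commuting_paulis :: "nat \<Rightarrow> complex mat list \<Rightarrow> bool" where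
  "commuting_paulis n L \<longleftrightarrow> (\<forall>A\<in>set L. herm_pauli n A) \<and> (\<forall>A\<in>set L. \<forall>B\<in>set L. A * B = B * A)"

lemma commuting_paulis_Cons: "commuting_paulis n (x # L) \<Longrightarrow> commuting_paulis n L"
  unfolding commuting_paulis_def by auto

lemma commuting_paulis_carrier: "commuting_paulis n L \<Longrightarrow> A \<in> set L \<Longrightarrow> A \<in> CM n"
  unfolding commuting_paulis_def using herm_pauli_carrier by blast

lemma prod_mats_nths_Cons:
  "prod_mats n (nths (x # l) I) =
     (if 0 \<in> I then x * prod_mats n (nths l {j. Suc j \<in> I}) else prod_mats n (nths l {j. Suc j \<in> I}))"
  by (simp add: nths_Cons)

lemma prod_mats_nths_carrier: "commuting_paulis n L \<Longrightarrow> prod_mats n (nths L I) \<in> CM n"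
  using commuting_paulis_carrier[of n L] set_nths_subset[of L I] by (intro prod_mats_carrier) auto

lemma commute_prod_mats_nths_Cons:
  assumes "commuting_paulis n (x # L)"
  shows "x * prod_mats n (nths L I) = prod_mats n (nths L I) * x"
  using assms set_nths_subset[of L I] commuting_paulis_carrier[OF assms] unfolding commuting_paulis_def
  by (intro commute_prod_mats) auto

lemma prod_mats_nths_mult:
  assumes "commuting_paulis n L"
  shows "prod_mats n (nths L I) * prod_mats n (nths L J) = prod_mats n (nths L (sym_diff I J))"
  using assms
proof (induction L arbitrary: I J)
  case Nil thus ?case by simp
next
  case (Cons x l)
  have l: "commuting_paulis n l" using Cons.prems commuting_paulis_Cons by blast
  have x: "x \<in> CM n" and xx: "x * x = 1\<^sub>m (2^n)"
    using Cons.prems herm_pauli_square unfolding commuting_paulis_def by (auto intro: herm_pauli_carrier)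
  define I' where "I' = {j. Suc j \<in> I}"
  define J' where "J' = {j. Suc j \<in> J}"
  let ?A = "prod_mats n (nths l I')" and ?B = "prod_mats n (nths l J')"
  have sym_diff_Suc: "{j. Suc j \<in> sym_diff I J} = sym_diff I' J'" unfolding I'_def J'_def by auto
  have IH: "?A * ?B = prod_mats n (nths l (sym_diff I' J'))" using Cons.IH[OF l] .
  have A: "?A \<in> CM n" and B: "?B \<in> CM n" using prod_mats_nths_carrier[OF l] by auto
  have xA: "x * ?A = ?A * x" using commute_prod_mats_nths_Cons[OF Cons.prems] .
  note dims = carrier_matD[OF x] carrier_matD[OF A] carrier_matD[OF B]
  have "?A * (x * ?B) = x * (?A * ?B)"
    using dims xA by (simp flip: assoc_mult_mat_dim)
  moreover have "(x * ?A) * (x * ?B) = ?A * ?B"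
  proof -
    have "(x * ?A) * (x * ?B) = x * (?A * (x * ?B))" using dims by (simp add: assoc_mult_mat_dim)
    also have "\<dots> = (x * x) * (?A * ?B)"
      unfolding \<open>?A * (x * ?B) = x * (?A * ?B)\<close> using dims by (simp add: assoc_mult_mat_dim)
    finally show ?thesis using dims xx by simp
  qed
  moreover have "(x * ?A) * ?B = x * (?A * ?B)"
    using dims by (simp add: assoc_mult_mat_dim)
  ultimately show ?case
    unfolding prod_mats_nths_Cons sym_diff_Suc I'_def[symmetric] J'_def[symmetric] IH[symmetric]
    by auto
qed

lemma prod_mats_nths_square:
  "commuting_paulis n L \<Longrightarrow> prod_mats n (nths L I) * prod_mats n (nths L I) = 1\<^sub>m (2^n)"
  using prod_mats_nths_mult[of n L I I] by simp

lemma mat_adjoint_prod_mats_nths: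
  assumes "commuting_paulis n L"
  shows "mat_adjoint (prod_mats n (nths L I)) = prod_mats n (nths L I)"
  using assms
proof (induction L arbitrary: I)
  case Nil thus ?case by (simp add: mat_adjoint_one)
next
  case (Cons x l)
  have l: "commuting_paulis n l" using Cons.prems commuting_paulis_Cons by blast
  have x: "x \<in> CM n" and "mat_adjoint x = x"
    using Cons.prems herm_pauli_adjoint unfolding commuting_paulis_def by (auto intro: herm_pauli_carrier)
  moreover have "mat_adjoint (x * prod_mats n (nths l I')) = prod_mats n (nths l I') * mat_adjoint x" for I'
    using Cons.IH[OF l] mat_adjoint_mult[OF x prod_mats_nths_carrier[OF l]] by simp
  ultimately show ?case
    using Cons.IH[OF l] commute_prod_mats_nths_Cons[OF Cons.prems] by (simp add: prod_mats_nths_Cons)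
qed

lemma nths_singleton_nth: "i < length L \<Longrightarrow> nths L {i} = [L ! i]"
proof (induction L arbitrary: i)
  case (Cons x l)
  thus ?case by (cases i) (simp_all add: nths_Cons)
qed simp

lemma gen_group_eq_prod_mats_nths:
  assumes "g \<in> gen_group n L" "commuting_paulis n L"
  shows "\<exists>I. I \<subseteq> {..<length L} \<and> g = prod_mats n (nths L I)"
  using assms
proof (induction rule: gen_group.induct)
  case one
  show ?case by (rule exI[of _ "{}"]) simp
next
  case (gen T)
  then obtain i where i: "i < length L" "L ! i = T" by (auto simp: in_set_conv_nth)
  have "T \<in> CM n" using gen commuting_paulis_carrier by blast
  thus ?case using i by (intro exI[of _ "{i}"]) (auto simp: nths_singleton_nth)
next
  case (mult A B)
  then obtain I J where "I \<subseteq> {..<length L}" "A = prod_mats n (nths L I)"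
    "J \<subseteq> {..<length L}" "B = prod_mats n (nths L J)" by blast
  thus ?case using prod_mats_nths_mult[OF mult.prems, of I J] by (intro exI[of _ "sym_diff I J"]) auto
next
  case (inv A)
  thus ?case using mat_adjoint_prod_mats_nths[OF inv.prems] by auto
qed

lemma signed_gen_group_eq_prod_mats_nths:
  assumes "S \<in> gen_group n L \<or> - S \<in> gen_group n L" "commuting_paulis n L"
  shows "\<exists>\<epsilon> I. (\<epsilon> = 1 \<or> \<epsilon> = -1) \<and> I \<subseteq> {..<length L} \<and> \<epsilon> \<cdot>\<^sub>m S = prod_mats n (nths L I)"
  using assms(1)
proof
  assume "S \<in> gen_group n L"
  thus ?thesis using gen_group_eq_prod_mats_nths[OF _ assms(2)] by (metis one_smult_mat)
next
  assume "- S \<in> gen_group n L"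
  thus ?thesis using gen_group_eq_prod_mats_nths[OF _ assms(2)] by (metis minus_one_smult_mat)
qed

lemma gen_group_carrier: "g \<in> gen_group n L \<Longrightarrow> \<forall>A\<in>set L. A \<in> CM n \<Longrightarrow> g \<in> CM n"
  by (induction rule: gen_group.induct) auto

lemma gen_group_square:
  "g \<in> gen_group n L \<Longrightarrow> commuting_paulis n L \<Longrightarrow> g * g = 1\<^sub>m (2^n)"
  using gen_group_eq_prod_mats_nths prod_mats_nths_square by blast

lemma gen_group_Cons: "g \<in> gen_group n L \<Longrightarrow> g \<in> gen_group n (T # L)"
  by (induction rule: gen_group.induct) (auto intro: gen_group.intros)

lemma gen_group_Cons_mult: "g \<in> gen_group n L \<Longrightarrow> T * g \<in> gen_group n (T # L)"
  by (rule gen_group.mult) (auto intro: gen_group.intros gen_group_Cons)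

section \<open>Stabilizer lists\<close>

definition outcome_sign :: "(nat \<Rightarrow> bool) \<Rightarrow> nat set \<Rightarrow> complex" where
  "outcome_sign w K = parity_sign {k \<in> K. w k}"

lemma outcome_sign_square [simp]: "outcome_sign w K * outcome_sign w K = 1"
  unfolding outcome_sign_def by simp

lemma outcome_sign_square_left [simp]: "outcome_sign w K * (outcome_sign w K * x) = x"
  by (simp flip: mult.assoc)

lemma outcome_sign_cases: "outcome_sign w K = 1 \<or> outcome_sign w K = -1"
  unfolding outcome_sign_def using parity_sign_cases by blast

lemma outcome_sign_empty [simp]: "outcome_sign w {} = 1"
  unfolding outcome_sign_def parity_sign_def by simp

lemma outcome_sign_singleton: "outcome_sign w {j} = (if w j then -1 else 1)"
proof -
  have "{k \<in> {j}. w k} = (if w j then {j} else {})" by auto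
  thus ?thesis unfolding outcome_sign_def parity_sign_def by simp
qed

lemma outcome_sign_symd:
  "finite A \<Longrightarrow> finite B \<Longrightarrow> outcome_sign w (symd A B) = outcome_sign w A * outcome_sign w B"
proof -
  assume "finite A" "finite B"
  moreover have "{k \<in> symd A B. w k} = sym_diff {k \<in> A. w k} {k \<in> B. w k}" unfolding symd_def by auto
  ultimately show ?thesis unfolding outcome_sign_def by (simp add: parity_sign_sym_diff)
qed

lemma sat_eq_iff_outcome_sign:
  "\<epsilon> = 1 \<or> \<epsilon> = -1 \<Longrightarrow> sat_eq w (K, \<epsilon> = -1) \<longleftrightarrow> outcome_sign w K = \<epsilon>"
  unfolding sat_eq_def outcome_sign_def parity_sign_def by auto

lemma finite_symd: "finite A \<Longrightarrow> finite B \<Longrightarrow> finite (symd A B)"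
  unfolding symd_def by auto

lemma symdiff_list_Nil [simp]: "symdiff_list [] = {}"
  unfolding symdiff_list_def by simp

lemma symdiff_list_Cons: "symdiff_list (K # Ks) = symd K (symdiff_list Ks)"
  unfolding symdiff_list_def symd_def by simp

lemma finite_symdiff_list: "\<forall>K\<in>set Ks. finite K \<Longrightarrow> finite (symdiff_list Ks)"
  by (induction Ks) (auto simp: symdiff_list_Cons finite_symd)

definition stab_list :: "nat \<Rightarrow> (complex mat \<times> nat set) list \<Rightarrow> bool" where
  "stab_list n SL \<longleftrightarrow> commuting_paulis n (map fst SL) \<and> (\<forall>(T, K)\<in>set SL. finite K)"

lemma stab_listI:
  assumes "\<forall>(T, K)\<in>set SL. herm_pauli n T \<and> finite K"
    and "\<forall>(T, K)\<in>set SL. \<forall>(T', K')\<in>set SL. T * T' = T' * T"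
  shows "stab_list n SL"
  using assms unfolding stab_list_def commuting_paulis_def by fastforce

lemma stab_list_Nil: "stab_list n []"
  unfolding stab_list_def commuting_paulis_def by simp

context
  fixes n SL assumes SL: "stab_list n SL"
begin

lemma stab_list_herm_pauli: "(T, K) \<in> set SL \<Longrightarrow> herm_pauli n T"
  using SL unfolding stab_list_def commuting_paulis_def by force

lemma stab_list_carrier: "(T, K) \<in> set SL \<Longrightarrow> T \<in> CM n"
  using stab_list_herm_pauli herm_pauli_carrier by blast

lemma stab_list_square: "(T, K) \<in> set SL \<Longrightarrow> T * T = 1\<^sub>m (2^n)"
  using stab_list_herm_pauli herm_pauli_square by blast

lemma stab_list_finite: "(T, K) \<in> set SL \<Longrightarrow> finite K"
  using SL unfolding stab_list_def by auto

lemma stab_list_commute: "(T, K) \<in> set SL \<Longrightarrow> (T', K') \<in> set SL \<Longrightarrow> T * T' = T' * T"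
  using SL unfolding stab_list_def commuting_paulis_def by force

end

lemma stab_list_subset: "stab_list n SL \<Longrightarrow> set SL' \<subseteq> set SL \<Longrightarrow> stab_list n SL'"
proof -
  assume "stab_list n SL" "set SL' \<subseteq> set SL"
  moreover from this(2) have "set (map fst SL') \<subseteq> set (map fst SL)" by auto
  ultimately show ?thesis unfolding stab_list_def commuting_paulis_def by blast
qed

text \<open>Soundness invariant: on the range of M, each T of the list acts as the sign that
  the outcomes w predict for it.\<close>
definition stabilizes :: "(nat \<Rightarrow> bool) \<Rightarrow> (complex mat \<times> nat set) list \<Rightarrow> complex mat \<Rightarrow> bool" where
  "stabilizes w SL M \<longleftrightarrow> (\<forall>(T, K)\<in>set SL. T * M = outcome_sign w K \<cdot>\<^sub>m M)"

lemma prod_mats_mult_stabilized: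
  assumes M: "M \<in> CM n" and L: "stab_list n L" and stab: "stabilizes w L M"
  shows "prod_mats n (map fst L) * M = outcome_sign w (symdiff_list (map snd L)) \<cdot>\<^sub>m M"
  using L stab
proof (induction L)
  case Nil thus ?case using M by simp
next
  case (Cons p L)
  obtain T K where p: "p = (T, K)" by force
  have pL: "(T, K) \<in> set (p # L)" using p by simp
  have L: "stab_list n L" using Cons.prems(1) by (rule stab_list_subset) auto
  note T = stab_list_carrier[OF Cons.prems(1) pL] stab_list_finite[OF Cons.prems(1) pL]
  have TM: "T * M = outcome_sign w K \<cdot>\<^sub>m M" using Cons.prems(2) p unfolding stabilizes_def by auto
  have P: "prod_mats n (map fst L) \<in> CM n"
    using stab_list_carrier[OF L] by (intro prod_mats_carrier) auto
  have fin: "finite (symdiff_list (map snd L))"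
    using stab_list_finite[OF L] by (intro finite_symdiff_list) auto
  have "prod_mats n (map fst (p # L)) * M = T * (prod_mats n (map fst L) * M)"
    using p carrier_matD[OF T(1)] carrier_matD[OF P] carrier_matD[OF M] by (simp add: mat_algebra_dim)
  also have "\<dots> = outcome_sign w (symdiff_list (map snd L)) \<cdot>\<^sub>m (T * M)"
    using Cons.IH[OF L] Cons.prems(2) carrier_matD[OF T(1)] carrier_matD[OF M]
    unfolding stabilizes_def by (simp add: mat_algebra_dim)
  also have "\<dots> = outcome_sign w (symdiff_list (map snd (p # L))) \<cdot>\<^sub>m M"
    using p T(2) fin TM by (simp add: symdiff_list_Cons outcome_sign_symd smult_smult_mat ac_simps)
  finally show ?case .
qed

fun stab_factor :: "nat \<Rightarrow> (nat \<Rightarrow> bool) \<Rightarrow> complex mat \<times> nat set \<Rightarrow> complex mat" where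
  "stab_factor n w (T, K) = 1\<^sub>m (2^n) + outcome_sign w K \<cdot>\<^sub>m T"

text \<open>stab_prod n w SL is 2^|SL| times the projector onto the joint eigenspace of
  the list with the signs predicted by w.\<close>
definition stab_prod :: "nat \<Rightarrow> (nat \<Rightarrow> bool) \<Rightarrow> (complex mat \<times> nat set) list \<Rightarrow> complex mat" where
  "stab_prod n w SL = prod_mats n (map (stab_factor n w) SL)"

declare stab_factor.simps [simp del]

lemma stab_factor_carrier: "T \<in> CM n \<Longrightarrow> stab_factor n w (T, K) \<in> CM n"
  by (simp add: stab_factor.simps)

lemma stab_prod_carrier: "\<forall>(T, K)\<in>set SL. T \<in> CM n \<Longrightarrow> stab_prod n w SL \<in> CM n"
  unfolding stab_prod_def by (intro prod_mats_carrier) (auto intro: stab_factor_carrier)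

lemma stab_prod_Nil [simp]: "stab_prod n w [] = 1\<^sub>m (2^n)"
  unfolding stab_prod_def by simp

lemma stab_prod_Cons: "stab_prod n w (p # L) = stab_factor n w p * stab_prod n w L"
  unfolding stab_prod_def by simp

lemma stab_prod_append:
  "\<forall>(T, K)\<in>set L1. T \<in> CM n \<Longrightarrow> \<forall>(T, K)\<in>set L2. T \<in> CM n \<Longrightarrow>
    stab_prod n w (L1 @ L2) = stab_prod n w L1 * stab_prod n w L2"
  unfolding stab_prod_def map_append by (rule prod_mats_append) (auto intro: stab_factor_carrier)

lemma commute_stab_factor:
  assumes X: "X \<in> CM n" and T: "T \<in> CM n" and XT: "X * T = T * X"
  shows "X * stab_factor n w (T, K) = stab_factor n w (T, K) * X"
  using carrier_matD[OF X] carrier_matD[OF T] XT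
  by (simp add: stab_factor.simps mat_algebra_dim mult_add_mat_dim add_mult_mat_dim)

lemma commute_stab_prod:
  assumes X: "X \<in> CM n" and L: "\<forall>(T, K)\<in>set L. T \<in> CM n \<and> X * T = T * X"
  shows "X * stab_prod n w L = stab_prod n w L * X"
  unfolding stab_prod_def using L commute_stab_factor[OF X]
  by (intro commute_prod_mats[OF X]) (auto intro: stab_factor_carrier)

lemma pauli_mult_stab_factor:
  assumes T: "T \<in> CM n" and TT: "T * T = 1\<^sub>m (2^n)"
  shows "T * stab_factor n w (T, K) = outcome_sign w K \<cdot>\<^sub>m stab_factor n w (T, K)"
    and "stab_factor n w (T, K) * T = outcome_sign w K \<cdot>\<^sub>m stab_factor n w (T, K)"
proof -
  have "T * stab_factor n w (T, K) = outcome_sign w K \<cdot>\<^sub>m 1\<^sub>m (2^n) + T"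
    using carrier_matD[OF T] TT
    by (simp add: stab_factor.simps mult_add_mat_dim mult_smult_mat_dim comm_add_mat[OF T])
  also have "\<dots> = outcome_sign w K \<cdot>\<^sub>m stab_factor n w (T, K)"
    using carrier_matD[OF T] by (simp add: stab_factor.simps smult_add_mat_dim smult_smult_mat)
  finally show "T * stab_factor n w (T, K) = outcome_sign w K \<cdot>\<^sub>m stab_factor n w (T, K)" .
  thus "stab_factor n w (T, K) * T = outcome_sign w K \<cdot>\<^sub>m stab_factor n w (T, K)"
    using commute_stab_factor[OF T T refl] by simp
qed

lemma stab_prod_stabilized:
  assumes SL: "stab_list n SL" and TK: "(T, K) \<in> set SL"
  shows "T * stab_prod n w SL = outcome_sign w K \<cdot>\<^sub>m stab_prod n w SL"
  using SL TK
proof (induction SL)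
  case Nil thus ?case by simp
next
  case (Cons q L)
  obtain T' K' where q: "q = (T', K')" by force
  have L: "stab_list n L" using Cons.prems(1) by (rule stab_list_subset) auto
  have T: "T \<in> CM n" using stab_list_carrier[OF Cons.prems] .
  have T': "T' \<in> CM n" using stab_list_carrier[OF Cons.prems(1), of T' K'] q by simp
  have Q: "stab_prod n w L \<in> CM n" using stab_list_carrier[OF L] by (intro stab_prod_carrier) auto
  have F: "stab_factor n w q \<in> CM n" using stab_factor_carrier[OF T'] q by simp
  note dims = carrier_matD[OF T] carrier_matD[OF Q] carrier_matD[OF F]
  have "T * stab_prod n w (q # L) = (T * stab_factor n w q) * stab_prod n w L"
    unfolding stab_prod_Cons using dims by (simp add: mat_algebra_dim)
  also have "\<dots> = outcome_sign w K \<cdot>\<^sub>m stab_prod n w (q # L)"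
  proof (cases "q = (T, K)")
    case True
    thus ?thesis using pauli_mult_stab_factor(1)[OF T stab_list_square[OF Cons.prems]] dims
      unfolding stab_prod_Cons by (simp add: mat_algebra_dim)
  next
    case False
    hence "(T, K) \<in> set L" using Cons.prems by auto
    moreover have "T * T' = T' * T" using stab_list_commute[OF Cons.prems, of T' K'] q by simp
    ultimately show ?thesis
      using Cons.IH[OF L] commute_stab_factor[OF T T'] q dims
      unfolding stab_prod_Cons by (simp add: mat_algebra_dim)
  qed
  finally show ?case .
qed

lemma stab_prod_mult_stabilizer:
  assumes SL: "stab_list n SL" and TK: "(T, K) \<in> set SL"
  shows "stab_prod n w SL * T = outcome_sign w K \<cdot>\<^sub>m stab_prod n w SL"
proof -
  have "T * stab_prod n w SL = stab_prod n w SL * T"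
    using stab_list_carrier[OF SL] stab_list_commute[OF SL TK]
    by (intro commute_stab_prod) (auto simp: stab_list_carrier[OF SL TK])
  thus ?thesis using stab_prod_stabilized[OF assms] by simp
qed

lemma stab_prod_conjugate:
  assumes U: "unitary_n n U" and SL: "\<forall>(T, K)\<in>set SL. T \<in> CM n"
  shows "stab_prod n w (map (\<lambda>(T, K). (U * T * mat_adjoint U, K)) SL) = U * stab_prod n w SL * mat_adjoint U"
  using SL
proof (induction SL)
  case Nil
  thus ?case using U unfolding unitary_n_def by (auto simp: right_mult_one_mat)
next
  case (Cons p L)
  obtain T K where p: "p = (T, K)" by force
  have T: "T \<in> CM n" using Cons.prems p by auto
  have Q: "stab_prod n w L \<in> CM n" using Cons.prems by (intro stab_prod_carrier) auto
  have Uc: "U \<in> CM n" "mat_adjoint U \<in> CM n" and UU: "mat_adjoint U * U = 1\<^sub>m (2^n)"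
    using U unfolding unitary_n_def by auto
  note dims = carrier_matD[OF T] carrier_matD[OF Q] carrier_matD[OF Uc(1)] carrier_matD[OF Uc(2)]
  have cancel: "mat_adjoint U * (U * X) = X" if "dim_row X = 2^n" for X
    using that dims UU by (simp flip: assoc_mult_mat_dim)
  have "stab_prod n w (map (\<lambda>(T, K). (U * T * mat_adjoint U, K)) (p # L)) =
     stab_factor n w (U * T * mat_adjoint U, K) * (U * stab_prod n w L * mat_adjoint U)"
    using Cons p by (simp add: stab_prod_Cons)
  also have "\<dots> = U * (stab_factor n w (T, K) * stab_prod n w L) * mat_adjoint U"
    using dims UU cancel
    by (simp add: stab_factor.simps mat_algebra_dim add_mult_mat_dim mult_add_mat_dim smult_add_mat_dim)
  finally show ?case using p by (simp add: stab_prod_Cons)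
qed

text \<open>Expanding the product, X * stab_prod n w L is a signed sum of terms X * g with g in the
  generated group; none of them is a multiple of the identity, so each is traceless.\<close>
lemma trace_scaled_pauli_mult_stab_prod:
  "\<forall>(T, K)\<in>set L. herm_pauli n T \<Longrightarrow> scaled_pauli n X \<Longrightarrow>
    \<forall>g\<in>gen_group n (map fst L). \<forall>l. X * g \<noteq> l \<cdot>\<^sub>m 1\<^sub>m (2^n) \<Longrightarrow> trace (X * stab_prod n w L) = 0"
proof (induction L arbitrary: X)
  case Nil
  have X: "X \<in> CM n" using Nil.prems scaled_pauli_carrier by blast
  have "X * 1\<^sub>m (2^n) \<noteq> l \<cdot>\<^sub>m 1\<^sub>m (2^n)" for l
    using Nil.prems(3) gen_group.one[of n "map fst []"] by blast
  hence "X \<noteq> l \<cdot>\<^sub>m 1\<^sub>m (2^n)" for l using X by simp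
  thus ?case using trace_scaled_pauli[OF Nil.prems(2)] X by auto
next
  case (Cons p L)
  obtain T K where p: "p = (T, K)" by force
  have X: "X \<in> CM n" using Cons.prems scaled_pauli_carrier by blast
  have T: "herm_pauli n T" using Cons.prems p by auto
  have Tc: "T \<in> CM n" using T herm_pauli_carrier by auto
  have L: "\<forall>(T, K)\<in>set L. herm_pauli n T" using Cons.prems by auto
  have Q: "stab_prod n w L \<in> CM n" using L herm_pauli_carrier by (intro stab_prod_carrier) auto
  note dims = carrier_matD[OF X] carrier_matD[OF Tc] carrier_matD[OF Q]
  have split: "X * stab_prod n w (p # L) =
      X * stab_prod n w L + outcome_sign w K \<cdot>\<^sub>m ((X * T) * stab_prod n w L)"
    unfolding stab_prod_Cons p stab_factor.simps using dims by (simp add: mat_algebra_dim add_mult_mat_dim mult_add_mat_dim)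
  have "trace (X * stab_prod n w L) = 0"
  proof (rule Cons.IH[OF L Cons.prems(2)], intro ballI allI)
    fix g l assume "g \<in> gen_group n (map fst L)"
    hence "g \<in> gen_group n (map fst (p # L))" using gen_group_Cons by auto
    thus "X * g \<noteq> l \<cdot>\<^sub>m 1\<^sub>m (2^n)" using Cons.prems(3) by blast
  qed
  moreover have "trace ((X * T) * stab_prod n w L) = 0"
  proof (rule Cons.IH[OF L scaled_pauli_mult[OF Cons.prems(2) herm_pauli_scaled[OF T]]], intro ballI allI)
    fix g l assume g: "g \<in> gen_group n (map fst L)"
    have "dim_row g = 2^n" using gen_group_carrier[OF g] L herm_pauli_carrier by fastforce
    moreover have "T * g \<in> gen_group n (map fst (p # L))" using gen_group_Cons_mult[OF g] p by simp
    ultimately show "X * T * g \<noteq> l \<cdot>\<^sub>m 1\<^sub>m (2^n)" using Cons.prems(3) dims by (simp add: assoc_mult_mat_dim)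
  qed
  ultimately show ?case unfolding split using dims X Tc Q
    by (simp add: trace_add[of _ "2^n"] trace_smult[of _ "2^n"])
qed

lemma trace_pauli_mult_stab_prod_eq_0:
  assumes SL: "stab_list n SL" and S: "herm_pauli n S"
    and not_in_group: "\<not> (S \<in> gen_group n (map fst SL) \<or> - S \<in> gen_group n (map fst SL))"
  shows "trace (S * stab_prod n w SL) = 0"
proof (rule trace_scaled_pauli_mult_stab_prod)
  show "\<forall>(T, K)\<in>set SL. herm_pauli n T" using stab_list_herm_pauli[OF SL] by blast
  show "scaled_pauli n S" using S herm_pauli_scaled by blast
  have comm: "commuting_paulis n (map fst SL)" using SL unfolding stab_list_def by auto
  have Sc: "S \<in> CM n" and SS: "S * S = 1\<^sub>m (2^n)" using S herm_pauli_carrier herm_pauli_square by auto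
  show "\<forall>g\<in>gen_group n (map fst SL). \<forall>l. S * g \<noteq> l \<cdot>\<^sub>m 1\<^sub>m (2^n)"
  proof (intro ballI allI notI)
    fix g l assume g: "g \<in> gen_group n (map fst SL)" and Sg: "S * g = l \<cdot>\<^sub>m 1\<^sub>m (2^n)"
    have gg: "g * g = 1\<^sub>m (2^n)" using gen_group_square[OF g comm] .
    have gc: "g \<in> CM n" using gen_group_carrier[OF g] stab_list_carrier[OF SL] by fastforce
    have "S = (S * g) * g" using gg carrier_matD[OF Sc] carrier_matD[OF gc] by (simp add: assoc_mult_mat_dim)
    hence S_eq: "S = l \<cdot>\<^sub>m g" using Sg gc by (simp add: smult_mult_mat_dim)
    have "1\<^sub>m (2^n) = (l * l) \<cdot>\<^sub>m (g * g)" using SS gc unfolding S_eq by (simp add: mat_algebra_dim)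
    hence "(1\<^sub>m (2^n) :: complex mat) $$ (0, 0) = ((l * l) \<cdot>\<^sub>m 1\<^sub>m (2^n)) $$ (0, 0)" using gg by simp
    hence "l * l = 1" by simp
    hence "l = 1 \<or> l = -1" by (metis power2_eq_1_iff power2_eq_square)
    thus False using S_eq g not_in_group by (auto simp: minus_one_smult_mat)
  qed
qed

definition eig_proj :: "nat \<Rightarrow> complex mat \<Rightarrow> complex \<Rightarrow> complex mat" where
  "eig_proj n S p = (1/2 :: complex) \<cdot>\<^sub>m (1\<^sub>m (2^n) + p \<cdot>\<^sub>m S)"

lemma projector_eq_eig_proj: "projector n S b = eig_proj n S (if b then -1 else 1)"
  unfolding projector_def eig_proj_def ..

lemma eig_proj_carrier: "S \<in> CM n \<Longrightarrow> eig_proj n S p \<in> CM n"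
  unfolding eig_proj_def by auto

lemma projector_carrier: "S \<in> CM n \<Longrightarrow> projector n S b \<in> CM n"
  unfolding projector_eq_eig_proj by (rule eig_proj_carrier)

lemma eig_proj_mult_eigen:
  assumes S: "S \<in> CM n" and X: "X \<in> CM n" and SX: "S * X = c \<cdot>\<^sub>m X"
  shows "eig_proj n S p * X = ((1 + p * c) / 2) \<cdot>\<^sub>m X"
proof -
  have "eig_proj n S p * X = (1/2 :: complex) \<cdot>\<^sub>m (X + (p * c) \<cdot>\<^sub>m X)"
    unfolding eig_proj_def using carrier_matD[OF S] carrier_matD[OF X] SX
    by (simp add: mat_algebra_dim add_mult_mat_dim)
  also have "X + (p * c) \<cdot>\<^sub>m X = (1 + p * c) \<cdot>\<^sub>m X"
    using X by (simp add: add_smult_distrib_right_mat)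
  finally show ?thesis by (simp add: smult_smult_mat)
qed

lemma pauli_mult_eig_proj:
  assumes S: "S \<in> CM n" and SS: "S * S = 1\<^sub>m (2^n)" and p: "p * p = 1"
  shows "S * eig_proj n S p = p \<cdot>\<^sub>m eig_proj n S p"
proof -
  have "S * eig_proj n S p = (1/2 :: complex) \<cdot>\<^sub>m (p \<cdot>\<^sub>m 1\<^sub>m (2^n) + S)"
    unfolding eig_proj_def using carrier_matD[OF S] SS
    by (simp add: mat_algebra_dim mult_add_mat_dim comm_add_mat[OF S])
  also have "p \<cdot>\<^sub>m 1\<^sub>m (2^n) + S = p \<cdot>\<^sub>m (1\<^sub>m (2^n) + p \<cdot>\<^sub>m S)"
    using S p by (simp add: smult_add_mat_dim smult_smult_mat)
  finally show ?thesis unfolding eig_proj_def by (simp add: smult_smult_mat ac_simps)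
qed

lemma eig_proj_idem:
  assumes S: "S \<in> CM n" and SS: "S * S = 1\<^sub>m (2^n)" and p: "p * p = 1"
  shows "eig_proj n S p * eig_proj n S p = eig_proj n S p"
  using eig_proj_mult_eigen[OF S eig_proj_carrier[OF S] pauli_mult_eig_proj[OF S SS p], of p] p by simp

lemma commute_eig_proj:
  assumes S: "S \<in> CM n" and X: "X \<in> CM n" and XS: "X * S = S * X"
  shows "eig_proj n S p * X = X * eig_proj n S p"
  unfolding eig_proj_def using carrier_matD[OF S] carrier_matD[OF X] XS
  by (simp add: mat_algebra_dim add_mult_mat_dim mult_add_mat_dim)

lemma eig_proj_anticommute_eig_proj:
  assumes S: "S \<in> CM n" and SS: "S * S = 1\<^sub>m (2^n)" and p: "p * p = 1"
    and T: "T \<in> CM n" and TS: "T * S = - (S * T)"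
  shows "eig_proj n S p * (T * eig_proj n S p) = 0\<^sub>m (2^n) (2^n)"
proof -
  note P = eig_proj_carrier[OF S]
  note dims = carrier_matD[OF S] carrier_matD[OF T] carrier_matD[OF P]
  have "eig_proj n S p * T = T * eig_proj n S (-p)"
    unfolding eig_proj_def using dims TS
    by (simp add: mat_algebra_dim add_mult_mat_dim mult_add_mat_dim smult_uminus_mat)
  moreover have "eig_proj n S (-p) * eig_proj n S p = (0::complex) \<cdot>\<^sub>m eig_proj n S p"
    using eig_proj_mult_eigen[OF S P pauli_mult_eig_proj[OF S SS p]] p by simp
  moreover have "(0::complex) \<cdot>\<^sub>m eig_proj n S p = 0\<^sub>m (2^n) (2^n)"
    using carrier_matD[OF P] by (intro eq_matI) auto
  ultimately show ?thesis using dims by (simp flip: assoc_mult_mat_dim) (simp add: assoc_mult_mat_dim)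
qed

lemma eig_proj_stab_factor_eig_proj:
  assumes S: "S \<in> CM n" and SS: "S * S = 1\<^sub>m (2^n)" and p: "p * p = 1"
    and T: "T \<in> CM n" and TS: "T * S = - (S * T)"
  shows "eig_proj n S p * (stab_factor n w (T, K) * eig_proj n S p) = eig_proj n S p"
proof -
  note P = eig_proj_carrier[OF S, of p]
  have "eig_proj n S p * (T * eig_proj n S p) = 0\<^sub>m (2^n) (2^n)"
    by (rule eig_proj_anticommute_eig_proj[OF S SS p T TS])
  thus ?thesis
    unfolding stab_factor.simps using eig_proj_idem[OF S SS p] carrier_matD[OF P] carrier_matD[OF T]
    by (simp add: add_mult_mat_dim mult_add_mat_dim mat_algebra_dim right_add_zero_mat[OF P])
qed

lemma trace_eig_proj_mult:
  assumes S: "S \<in> CM n" and Q: "Q \<in> CM n"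
  shows "trace (eig_proj n S p * Q) = trace Q / 2 + p / 2 * trace (S * Q)"
proof -
  have "eig_proj n S p * Q = (1/2 :: complex) \<cdot>\<^sub>m (Q + p \<cdot>\<^sub>m (S * Q))"
    unfolding eig_proj_def using carrier_matD[OF S] carrier_matD[OF Q] by (simp add: mat_algebra_dim add_mult_mat_dim)
  hence "trace (eig_proj n S p * Q) = 1/2 * (trace Q + p * trace (S * Q))"
    using S Q by (simp add: trace_smult[of _ "2^n"] trace_add[of _ "2^n"])
  thus ?thesis by (simp add: field_simps)
qed

lemma eig_proj_add: "S \<in> CM n \<Longrightarrow> eig_proj n S 1 + eig_proj n S (-1) = 1\<^sub>m (2^n)"
  unfolding eig_proj_def by (rule eq_matI) (auto simp: field_simps)

lemma eig_proj_preserves_eigen: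
  assumes S: "S \<in> CM n" and X: "X \<in> CM n" and M: "M \<in> CM n"
    and XS: "X * S = S * X" and XM: "X * M = a \<cdot>\<^sub>m M"
  shows "X * (eig_proj n S p * M) = a \<cdot>\<^sub>m (eig_proj n S p * M)"
proof -
  note P = eig_proj_carrier[OF S]
  note dims = carrier_matD[OF X] carrier_matD[OF P] carrier_matD[OF M]
  have "X * (eig_proj n S p * M) = (eig_proj n S p * X) * M"
    using dims commute_eig_proj[OF S X XS] by (simp add: assoc_mult_mat_dim)
  also have "\<dots> = a \<cdot>\<^sub>m (eig_proj n S p * M)" using XM dims by (simp add: mat_algebra_dim)
  finally show ?thesis .
qed

lemma stab_factor_mult_absorb:
  assumes T: "T \<in> CM n" "T * T = 1\<^sub>m (2^n)" and T': "T' \<in> CM n" and fin: "finite K" "finite K'"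
  shows "stab_factor n w (T, K) * stab_factor n w (T', K') =
    stab_factor n w (T, K) * stab_factor n w (T * T', symd K K')"
proof -
  define F where "F = stab_factor n w (T, K)"
  have F: "F \<in> CM n" unfolding F_def using stab_factor_carrier[OF T(1)] .
  note dims = carrier_matD[OF F] carrier_matD[OF T(1)] carrier_matD[OF T']
  have FT: "F * T = outcome_sign w K \<cdot>\<^sub>m F" unfolding F_def using pauli_mult_stab_factor(2)[OF T] .
  have "F * (T * T') = outcome_sign w K \<cdot>\<^sub>m (F * T')"
    using FT dims by (simp flip: assoc_mult_mat_dim add: mat_algebra_dim)
  moreover have sign: "outcome_sign w K * outcome_sign w K' * outcome_sign w K = outcome_sign w K'"
    by (metis mult.commute outcome_sign_square_left)
  ultimately have "F * stab_factor n w (T * T', symd K K') = F + outcome_sign w K' \<cdot>\<^sub>m (F * T')"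
    using dims fin by (simp add: stab_factor.simps mult_add_mat_dim mult_smult_mat_dim outcome_sign_symd
        smult_smult_mat sign)
  also have "\<dots> = F * stab_factor n w (T', K')"
    using dims by (simp add: stab_factor.simps mult_add_mat_dim mult_smult_mat_dim)
  finally show ?thesis unfolding F_def ..
qed

definition anticomm_update ::
    "complex mat \<Rightarrow> nat set \<Rightarrow> complex mat \<Rightarrow> complex mat \<times> nat set \<Rightarrow> complex mat \<times> nat set" where
  "anticomm_update T K S = (\<lambda>(T', K'). if anticommute T' S then (T * T', symd K K') else (T', K'))"

lemma anticomm_update_fst:
  "fst (anticomm_update T K S (T', K')) = (if anticommute T' S then T * T' else T')"
  unfolding anticomm_update_def by simp

lemma anticomm_update_snd:
  "snd (anticomm_update T K S (T', K')) = (if anticommute T' S then symd K K' else K')"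
  unfolding anticomm_update_def by simp

lemma stab_factor_mult_stab_prod_absorb:
  assumes T: "T \<in> CM n" "T * T = 1\<^sub>m (2^n)" "finite K"
    and L: "\<forall>(T', K')\<in>set L. T' \<in> CM n \<and> finite K' \<and> T * T' = T' * T"
  shows "stab_factor n w (T, K) * stab_prod n w L =
    stab_factor n w (T, K) * stab_prod n w (map (anticomm_update T K S) L)"
  using L
proof (induction L)
  case Nil thus ?case by simp
next
  case (Cons q L)
  obtain T' K' where q: "q = (T', K')" by force
  have T': "T' \<in> CM n" "finite K'" "T * T' = T' * T" using Cons.prems q by auto
  obtain T'' K'' where q': "anticomm_update T K S q = (T'', K'')" by force
  define F where "F = stab_factor n w (T, K)"
  define G where "G = stab_factor n w (T'', K'')"
  note dimsT = carrier_matD[OF T(1)] carrier_matD[OF T'(1)]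
  have "T * (T * T') = (T * T) * T'" using dimsT by (simp add: assoc_mult_mat_dim)
  hence "T * (T * T') = T'" using T(2) dimsT by simp
  moreover have "(T * T') * T = T' * (T * T)" unfolding T'(3) using dimsT by (simp add: assoc_mult_mat_dim)
  hence "(T * T') * T = T'" using T(2) dimsT by simp
  ultimately have T'': "T'' \<in> CM n" "T'' * T = T * T''"
    using q' T(1) T'(1,3) anticomm_update_fst[of T K S T' K'] unfolding q by (auto split: if_splits)
  have F: "F \<in> CM n" and G: "G \<in> CM n" unfolding F_def G_def using T(1) T''(1) by (auto intro: stab_factor_carrier)
  have "T'' * F = F * T''" unfolding F_def by (rule commute_stab_factor[OF T''(1) T(1) T''(2)])
  hence FG: "F * G = G * F" unfolding G_def by (rule commute_stab_factor[OF F T''(1) sym])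
  have absorb: "F * stab_factor n w q = F * G"
    unfolding F_def G_def using q' stab_factor_mult_absorb[OF T(1,2) T'(1) T(3) T'(2)]
    unfolding q anticomm_update_def by (auto split: if_splits)
  have Q: "stab_prod n w L \<in> CM n" using Cons.prems by (intro stab_prod_carrier) auto
  have Q': "stab_prod n w (map (anticomm_update T K S) L) \<in> CM n"
    using Cons.prems T(1) by (intro stab_prod_carrier) (auto simp: anticomm_update_def split: prod.splits)
  note dims = carrier_matD[OF F] carrier_matD[OF G] carrier_matD[OF Q] carrier_matD[OF Q']
  have "F * stab_prod n w (q # L) = (F * stab_factor n w q) * stab_prod n w L"
    unfolding stab_prod_Cons q using dims carrier_matD[OF stab_factor_carrier[OF T'(1)]]
    by (simp add: assoc_mult_mat_dim)
  also have "\<dots> = (F * G) * stab_prod n w L" unfolding absorb ..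
  also have "\<dots> = G * (F * stab_prod n w L)" unfolding FG using dims by (simp add: assoc_mult_mat_dim)
  also have "\<dots> = G * (F * stab_prod n w (map (anticomm_update T K S) L))"
    using Cons.IH Cons.prems unfolding F_def by simp
  also have "\<dots> = (G * F) * stab_prod n w (map (anticomm_update T K S) L)"
    using dims by (simp add: assoc_mult_mat_dim)
  also have "\<dots> = F * (G * stab_prod n w (map (anticomm_update T K S) L))"
    unfolding FG[symmetric] using dims by (simp add: assoc_mult_mat_dim)
  also have "\<dots> = F * stab_prod n w (map (anticomm_update T K S) (q # L))"
    unfolding G_def by (simp add: stab_prod_Cons q')
  finally show ?case unfolding F_def .
qed

lemma stab_prod_remove_nth:
  assumes SL: "stab_list n SL" and i: "i < length SL"
  shows "stab_prod n w SL = stab_factor n w (SL ! i) * stab_prod n w (take i SL @ drop (Suc i) SL)"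
proof -
  obtain T K where TK: "SL ! i = (T, K)" by force
  have TK_in: "(T, K) \<in> set SL" using TK i nth_mem by metis
  have carrier: "\<forall>(T', K')\<in>set L. T' \<in> CM n" if "set L \<subseteq> set SL" for L
    using that stab_list_carrier[OF SL] by blast
  have take: "set (take i SL) \<subseteq> set SL" and drop: "set (drop (Suc i) SL) \<subseteq> set SL"
    by (auto dest: in_set_takeD in_set_dropD)
  define F where "F = stab_factor n w (T, K)"
  have F: "F \<in> CM n" unfolding F_def using stab_factor_carrier[OF stab_list_carrier[OF SL TK_in]] .
  have A: "stab_prod n w (take i SL) \<in> CM n" and B: "stab_prod n w (drop (Suc i) SL) \<in> CM n"
    using carrier[OF take] carrier[OF drop] by (auto intro: stab_prod_carrier)
  note dims = carrier_matD[OF F] carrier_matD[OF A] carrier_matD[OF B]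
  have "F * T' = T' * F" if "(T', K') \<in> set (take i SL)" for T' K'
  proof -
    have T'_in: "(T', K') \<in> set SL" using that take by blast
    show ?thesis unfolding F_def using commute_stab_factor[OF stab_list_carrier[OF SL T'_in]
      stab_list_carrier[OF SL TK_in] stab_list_commute[OF SL T'_in TK_in]] by simp
  qed
  hence "stab_prod n w (take i SL) * F = F * stab_prod n w (take i SL)"
    using F stab_list_carrier[OF SL] take by (intro commute_stab_prod[symmetric]) auto
  moreover have "SL = take i SL @ (T, K) # drop (Suc i) SL" using id_take_nth_drop[OF i] TK by simp
  hence "stab_prod n w SL = stab_prod n w (take i SL) * (F * stab_prod n w (drop (Suc i) SL))"
    using stab_prod_append[OF carrier[OF take], of "(T, K) # drop (Suc i) SL" w] carrier[OF drop] TK_in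
      stab_list_carrier[OF SL TK_in]
    by (simp add: stab_prod_Cons F_def)
  ultimately show ?thesis
    using stab_prod_append[OF carrier[OF take] carrier[OF drop], of w] dims TK
    by (simp add: F_def flip: assoc_mult_mat_dim)
qed

lemma trace_mult_eq_0_if_anticommuting_eigen:
  assumes S: "S \<in> CM n" and T: "T \<in> CM n" and Q: "Q \<in> CM n"
    and TS: "T * S = - (S * T)" and TQ: "T * Q = \<sigma> \<cdot>\<^sub>m Q" and QT: "Q * T = \<sigma> \<cdot>\<^sub>m Q" and \<sigma>: "\<sigma> * \<sigma> = 1"
  shows "trace (S * Q) = 0"
proof -
  note dims = carrier_matD[OF S] carrier_matD[OF T] carrier_matD[OF Q]
  have SQ: "S * Q \<in> CM n" using S Q by simp
  have "S * (T * Q) = - (T * (S * Q))"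
    using TS dims by (simp flip: assoc_mult_mat_dim)
  moreover have "S * (T * Q) = \<sigma> \<cdot>\<^sub>m (S * Q)" using TQ dims by (simp add: mat_algebra_dim)
  ultimately have "trace (\<sigma> \<cdot>\<^sub>m (S * Q)) = - trace (T * (S * Q))"
    using T SQ by (simp add: trace_uminus[of _ "2^n"])
  also have "trace (T * (S * Q)) = trace ((S * Q) * T)" using T SQ by (rule trace_mult_comm)
  also have "(S * Q) * T = \<sigma> \<cdot>\<^sub>m (S * Q)" using QT dims by (simp add: mat_algebra_dim)
  finally have "\<sigma> * trace (S * Q) = - (\<sigma> * trace (S * Q))" using SQ by (simp add: trace_smult[of _ "2^n"])
  thus ?thesis using \<sigma> by auto
qed

lemma trace_pauli_mult_stab_prod_anticommuting:
  assumes SL: "stab_list n SL" and TK: "(T, K) \<in> set SL" and S: "S \<in> CM n" and TS: "anticommute T S"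
  shows "trace (S * stab_prod n w SL) = 0"
proof (rule trace_mult_eq_0_if_anticommuting_eigen[OF S stab_list_carrier[OF SL TK]])
  show "stab_prod n w SL \<in> CM n" using stab_list_carrier[OF SL] by (intro stab_prod_carrier) auto
qed (use TS stab_prod_stabilized[OF SL TK] stab_prod_mult_stabilizer[OF SL TK] in
      \<open>auto simp: anticommute_def\<close>)

section \<open>The invariants under the steps of the algorithm\<close>

lemma clifford_gate_unitary: "clifford_gate n U \<Longrightarrow> unitary_n n U"
  unfolding clifford_gate_def by simp

lemma stab_list_conjugate:
  assumes U: "clifford_gate n U" and SL: "stab_list n SL"
  shows "stab_list n (map (\<lambda>(T, K). (U * T * mat_adjoint U, K)) SL)"
proof (rule stab_listI)
  have Uu: "unitary_n n U" using U by (rule clifford_gate_unitary)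
  note Uc = unitary_carrier[OF Uu]
  show "\<forall>(T', K')\<in>set (map (\<lambda>(T, K). (U * T * mat_adjoint U, K)) SL). herm_pauli n T' \<and> finite K'"
    using U stab_list_herm_pauli[OF SL] stab_list_finite[OF SL] unfolding clifford_gate_def by auto
  have conj_mult: "U * T * mat_adjoint U * (U * T' * mat_adjoint U) = U * (T * (T' * mat_adjoint U))"
    if "(T, K) \<in> set SL" "(T', K') \<in> set SL" for T K T' K'
    using carrier_matD[OF stab_list_carrier[OF SL that(1)]] carrier_matD[OF stab_list_carrier[OF SL that(2)]]
      carrier_matD[OF conjunct1[OF Uc]] carrier_matD[OF conjunct2[OF Uc]] unitary_adjoint_cancel[OF Uu]
    by (simp add: assoc_mult_mat_dim)
  have "U * T * mat_adjoint U * (U * T' * mat_adjoint U) = U * T' * mat_adjoint U * (U * T * mat_adjoint U)"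
    if "(T, K) \<in> set SL" "(T', K') \<in> set SL" for T K T' K'
    unfolding conj_mult[OF that] conj_mult[OF that(2,1)]
    using mult_left_commute_mat[OF stab_list_carrier[OF SL that(2)] stab_list_carrier[OF SL that(1)]
        conjunct2[OF Uc] stab_list_commute[OF SL that(2,1)]] by simp
  thus "\<forall>(T1, K1)\<in>set (map (\<lambda>(T, K). (U * T * mat_adjoint U, K)) SL).
      \<forall>(T2, K2)\<in>set (map (\<lambda>(T, K). (U * T * mat_adjoint U, K)) SL). T1 * T2 = T2 * T1"
    by auto
qed

lemma stabilizes_conjugate:
  assumes U: "unitary_n n U" and SL: "stab_list n SL" and M: "M \<in> CM n" and stab: "stabilizes w SL M"
  shows "stabilizes w (map (\<lambda>(T, K). (U * T * mat_adjoint U, K)) SL) (U * M)"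
  unfolding stabilizes_def
proof (clarsimp)
  fix T K assume TK: "(T, K) \<in> set SL"
  note dims = carrier_matD[OF stab_list_carrier[OF SL TK]] carrier_matD[OF M]
    carrier_matD[OF conjunct1[OF unitary_carrier[OF U]]] carrier_matD[OF conjunct2[OF unitary_carrier[OF U]]]
  have "U * T * mat_adjoint U * (U * M) = U * (T * M)"
    using dims unitary_adjoint_cancel[OF U] by (simp add: assoc_mult_mat_dim)
  thus "U * T * mat_adjoint U * (U * M) = outcome_sign w K \<cdot>\<^sub>m (U * M)"
    using stab TK dims unfolding stabilizes_def by (auto simp: mat_algebra_dim)
qed

text \<open>Completeness invariant: the joint eigenspace selected by w is nonzero (its projector
  has nonzero trace) and lies in the range of M.\<close>
definition code_in_range :: "nat \<Rightarrow> (nat \<Rightarrow> bool) \<Rightarrow> (complex mat \<times> nat set) list \<Rightarrow> complex mat \<Rightarrow> bool" where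
  "code_in_range n w SL M \<longleftrightarrow> trace (stab_prod n w SL) \<noteq> 0 \<and> (\<exists>X\<in>CM n. stab_prod n w SL = M * X)"

lemma code_in_range_conjugate:
  assumes U: "unitary_n n U" and SL: "stab_list n SL" and M: "M \<in> CM n" and inv: "code_in_range n w SL M"
  shows "code_in_range n w (map (\<lambda>(T, K). (U * T * mat_adjoint U, K)) SL) (U * M)"
proof -
  obtain X where X: "X \<in> CM n" and QX: "stab_prod n w SL = M * X" and tr: "trace (stab_prod n w SL) \<noteq> 0"
    using inv unfolding code_in_range_def by blast
  note Uc = unitary_carrier[OF U]
  have Q: "stab_prod n w SL \<in> CM n" using stab_list_carrier[OF SL] by (intro stab_prod_carrier) auto
  note dims = carrier_matD[OF conjunct1[OF Uc]] carrier_matD[OF conjunct2[OF Uc]] carrier_matD[OF Q]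
    carrier_matD[OF M] carrier_matD[OF X]
  have conj: "stab_prod n w (map (\<lambda>(T, K). (U * T * mat_adjoint U, K)) SL) = U * stab_prod n w SL * mat_adjoint U"
    using stab_prod_conjugate[OF U] stab_list_carrier[OF SL] by blast
  have "trace (U * stab_prod n w SL * mat_adjoint U) = trace (U * (stab_prod n w SL * mat_adjoint U))"
    using dims by (simp add: assoc_mult_mat_dim)
  also have "\<dots> = trace ((stab_prod n w SL * mat_adjoint U) * U)"
    using Uc Q by (intro trace_mult_comm) auto
  also have "\<dots> = trace (stab_prod n w SL)"
    using U dims unfolding unitary_n_def by (simp add: assoc_mult_mat_dim)
  finally have "trace (U * stab_prod n w SL * mat_adjoint U) \<noteq> 0" using tr by simp
  moreover have "U * stab_prod n w SL * mat_adjoint U = (U * M) * (X * mat_adjoint U)"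
    unfolding QX using dims by (simp add: assoc_mult_mat_dim)
  moreover have "X * mat_adjoint U \<in> CM n" using X Uc by simp
  ultimately show ?thesis unfolding code_in_range_def conj by blast
qed

lemma stabilizes_subset: "stabilizes w SL M \<Longrightarrow> set L \<subseteq> set SL \<Longrightarrow> stabilizes w L M"
  unfolding stabilizes_def by blast

lemma stabilizes_stab_prod: "stab_list n SL \<Longrightarrow> stabilizes w SL (stab_prod n w SL)"
  unfolding stabilizes_def using stab_prod_stabilized by blast

lemma stab_factor_singleton: "stab_factor n w (S, {j}) = 2 \<cdot>\<^sub>m projector n S (w j)"
  unfolding stab_factor.simps projector_def outcome_sign_singleton
  by (auto simp: smult_smult_mat)

lemma projector_mult_in_group:
  assumes SL: "stab_list n SL" and S: "S \<in> CM n" and M: "M \<in> CM n" and stab: "stabilizes w SL M"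
    and \<epsilon>: "\<epsilon> = 1 \<or> \<epsilon> = -1" and I: "\<epsilon> \<cdot>\<^sub>m S = prod_mats n (map fst (nths SL I))"
  shows "projector n S (w j) * M =
    (if sat_eq w (symd {j} (symdiff_list (map snd (nths SL I))), \<epsilon> = -1) then M else 0\<^sub>m (2^n) (2^n))"
proof -
  define K where "K = symdiff_list (map snd (nths SL I))"
  define p where "p = (if w j then -1 else 1 :: complex)"
  have sub: "set (nths SL I) \<subseteq> set SL" by (rule set_nths_subset)
  have K: "finite K"
    unfolding K_def using stab_list_finite[OF SL] sub by (intro finite_symdiff_list) auto
  have "prod_mats n (map fst (nths SL I)) * M = outcome_sign w K \<cdot>\<^sub>m M"
    unfolding K_def by (rule prod_mats_mult_stabilized[OF M stab_list_subset[OF SL sub] stabilizes_subset[OF stab sub]])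
  moreover have "S = \<epsilon> \<cdot>\<^sub>m prod_mats n (map fst (nths SL I))"
    unfolding I[symmetric] smult_smult_mat using \<epsilon> by auto
  moreover have "prod_mats n (map fst (nths SL I)) \<in> CM n"
    using stab_list_carrier[OF SL] sub by (intro prod_mats_carrier) auto
  ultimately have "S * M = (\<epsilon> * outcome_sign w K) \<cdot>\<^sub>m M"
    using carrier_matD[OF M] by (auto simp: mat_algebra_dim)
  hence PM: "projector n S (w j) * M = ((1 + p * (\<epsilon> * outcome_sign w K)) / 2) \<cdot>\<^sub>m M"
    unfolding projector_eq_eig_proj p_def[symmetric] by (rule eig_proj_mult_eigen[OF S M])
  have sat: "sat_eq w (symd {j} K, \<epsilon> = -1) \<longleftrightarrow> p * outcome_sign w K = \<epsilon>"
    unfolding sat_eq_iff_outcome_sign[OF \<epsilon>] p_def using K by (simp add: outcome_sign_symd outcome_sign_singleton)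
  show ?thesis
    unfolding K_def[symmetric] sat PM using \<epsilon> outcome_sign_cases[of w K] carrier_matD[OF M]
    by (cases "w j") (auto simp: p_def intro!: eq_matI)
qed

lemma code_in_range_in_group:
  assumes SL: "stab_list n SL" and S: "S \<in> CM n" and M: "M \<in> CM n" and inv: "code_in_range n w SL M"
    and \<epsilon>: "\<epsilon> = 1 \<or> \<epsilon> = -1" and I: "\<epsilon> \<cdot>\<^sub>m S = prod_mats n (map fst (nths SL I))"
    and sat: "sat_eq w (symd {j} (symdiff_list (map snd (nths SL I))), \<epsilon> = -1)"
  shows "code_in_range n w SL (projector n S (w j) * M)"
proof -
  obtain X where X: "X \<in> CM n" and QX: "stab_prod n w SL = M * X"
    using inv unfolding code_in_range_def by blast
  have Q: "stab_prod n w SL \<in> CM n" using stab_list_carrier[OF SL] by (intro stab_prod_carrier) auto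
  have "stab_prod n w SL = projector n S (w j) * stab_prod n w SL"
    using projector_mult_in_group[OF SL S Q stabilizes_stab_prod[OF SL] \<epsilon> I] sat by simp
  also have "\<dots> = (projector n S (w j) * M) * X"
    unfolding QX using carrier_matD[OF projector_carrier[OF S]] carrier_matD[OF M] carrier_matD[OF X]
    by (simp add: assoc_mult_mat_dim)
  finally show ?thesis using inv X unfolding code_in_range_def by blast
qed

lemma stab_list_snoc:
  assumes S: "herm_pauli n S" and L: "stab_list n L" and comm: "\<forall>(T, K)\<in>set L. T * S = S * T"
  shows "stab_list n (L @ [(S, {j})])"
  using stab_list_herm_pauli[OF L] stab_list_finite[OF L] stab_list_commute[OF L] S comm
  by (intro stab_listI) fastforce+

lemma stabilizes_snoc_projector:
  assumes S: "herm_pauli n S" and M: "M \<in> CM n" and stab: "stabilizes w L M"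
    and comm: "\<forall>(T, K)\<in>set L. T \<in> CM n \<and> T * S = S * T"
  shows "stabilizes w (L @ [(S, {j})]) (projector n S (w j) * M)"
  unfolding stabilizes_def
proof (intro ballI, clarify)
  fix T K assume "(T, K) \<in> set (L @ [(S, {j})])"
  then consider "(T, K) \<in> set L" | "T = S" "K = {j}" by auto
  thus "T * (projector n S (w j) * M) = outcome_sign w K \<cdot>\<^sub>m (projector n S (w j) * M)"
  proof cases
    case 1
    thus ?thesis using stab comm eig_proj_preserves_eigen[OF herm_pauli_carrier[OF S] _ M] M
      unfolding stabilizes_def projector_eq_eig_proj by fastforce
  next
    case 2
    have Sc: "S \<in> CM n" using S herm_pauli_carrier by blast
    have "S * (projector n S (w j) * M) = (S * projector n S (w j)) * M"
      using carrier_matD[OF Sc] carrier_matD[OF projector_carrier[OF Sc]] carrier_matD[OF M]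
      by (simp add: assoc_mult_mat_dim)
    also have "\<dots> = outcome_sign w {j} \<cdot>\<^sub>m (projector n S (w j) * M)"
      unfolding projector_eq_eig_proj outcome_sign_singleton
      using pauli_mult_eig_proj[OF Sc herm_pauli_square[OF S], of "if w j then -1 else 1"]
        carrier_matD[OF eig_proj_carrier[OF Sc]] carrier_matD[OF M] by (simp add: mat_algebra_dim)
    finally show ?thesis using 2 by simp
  qed
qed

lemma code_in_range_snoc:
  assumes SL: "stab_list n SL" and S: "herm_pauli n S" and comm: "\<forall>(T, K)\<in>set SL. T * S = S * T"
    and not_in_group: "\<not> (S \<in> gen_group n (map fst SL) \<or> - S \<in> gen_group n (map fst SL))"
    and M: "M \<in> CM n" and inv: "code_in_range n w SL M"
  shows "code_in_range n w (SL @ [(S, {j})]) (projector n S (w j) * M)"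
proof -
  obtain X where X: "X \<in> CM n" and QX: "stab_prod n w SL = M * X" and tr: "trace (stab_prod n w SL) \<noteq> 0"
    using inv unfolding code_in_range_def by blast
  have Sc: "S \<in> CM n" using S herm_pauli_carrier by blast
  define P where "P = projector n S (w j)"
  define Q where "Q = stab_prod n w SL"
  have P: "P \<in> CM n" unfolding P_def using projector_carrier[OF Sc] .
  have Q: "Q \<in> CM n" unfolding Q_def using stab_list_carrier[OF SL] by (intro stab_prod_carrier) auto
  note dims = carrier_matD[OF P] carrier_matD[OF Q] carrier_matD[OF M] carrier_matD[OF X]
  have "\<forall>(T, K)\<in>set SL. T \<in> CM n" using stab_list_carrier[OF SL] by blast
  hence new: "stab_prod n w (SL @ [(S, {j})]) = Q * (2 \<cdot>\<^sub>m P)"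
    unfolding Q_def P_def using stab_prod_append[of SL n "[(S, {j})]" w] Sc
      carrier_matD[OF projector_carrier[OF Sc]]
    by (simp add: stab_prod_Cons stab_factor_singleton)
  have "S * Q = Q * S"
    unfolding Q_def using stab_list_carrier[OF SL] comm by (intro commute_stab_prod[OF Sc]) fastforce
  hence PQ: "P * Q = Q * P" unfolding P_def projector_eq_eig_proj by (rule commute_eig_proj[OF Sc Q sym])
  have QP: "Q * (2 \<cdot>\<^sub>m P) = 2 \<cdot>\<^sub>m (P * Q)"
    unfolding PQ using dims by (simp add: mat_algebra_dim)
  have "Q * (2 \<cdot>\<^sub>m P) = (P * M) * (2 \<cdot>\<^sub>m X)"
    unfolding QP unfolding Q_def QX using dims by (simp add: mat_algebra_dim)
  moreover have "trace (Q * (2 \<cdot>\<^sub>m P)) = trace Q"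
  proof -
    have "trace (Q * (2 \<cdot>\<^sub>m P)) = 2 * trace (P * Q)"
      unfolding QP using P Q by (simp add: trace_smult[of _ "2^n"])
    also have "\<dots> = trace Q"
      unfolding P_def projector_eq_eig_proj trace_eig_proj_mult[OF Sc Q]
      using trace_pauli_mult_stab_prod_eq_0[OF SL S not_in_group] unfolding Q_def by simp
    finally show ?thesis .
  qed
  moreover have "2 \<cdot>\<^sub>m X \<in> CM n" using X by simp
  ultimately show ?thesis
    unfolding code_in_range_def new using tr unfolding Q_def P_def by auto
qed

lemma trace_eig_proj_sandwich:
  assumes S: "S \<in> CM n" and SS: "S * S = 1\<^sub>m (2^n)" and p: "p * p = 1" and Q: "Q \<in> CM n"
  shows "trace (eig_proj n S p * (Q * eig_proj n S p)) = trace Q / 2 + p / 2 * trace (S * Q)"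
proof -
  define P where "P = eig_proj n S p"
  have P: "P \<in> CM n" unfolding P_def using eig_proj_carrier[OF S] .
  note dims = carrier_matD[OF P] carrier_matD[OF Q]
  have "trace (P * (Q * P)) = trace ((Q * P) * P)" using P Q by (intro trace_mult_comm) auto
  also have "(Q * P) * P = Q * P"
    using eig_proj_idem[OF S SS p] dims unfolding P_def[symmetric] by (simp add: assoc_mult_mat_dim)
  also have "trace (Q * P) = trace (P * Q)" using Q P by (rule trace_mult_comm)
  finally show ?thesis unfolding P_def trace_eig_proj_mult[OF S Q] .
qed

context
  fixes n SL T K S
  assumes SL: "stab_list n SL" and TK: "(T, K) \<in> set SL" and S: "herm_pauli n S"
    and TS: "anticommute T S"
begin

lemma anticomm_update_herm_pauli:
  "(T', K') \<in> set SL \<Longrightarrow> herm_pauli n (fst (anticomm_update T K S (T', K')))"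
  using herm_pauli_mult[OF stab_list_herm_pauli[OF SL TK] stab_list_herm_pauli[OF SL]]
    stab_list_commute[OF SL TK] stab_list_herm_pauli[OF SL]
  by (simp add: anticomm_update_fst)

lemma anticomm_update_finite: "(T', K') \<in> set SL \<Longrightarrow> finite (snd (anticomm_update T K S (T', K')))"
  using stab_list_finite[OF SL TK] stab_list_finite[OF SL] by (simp add: anticomm_update_snd finite_symd)

lemma anticomm_update_commute_measured:
  assumes T'K': "(T', K') \<in> set SL"
  shows "fst (anticomm_update T K S (T', K')) * S = S * fst (anticomm_update T K S (T', K'))"
proof (cases "anticommute T' S")
  case True
  note dims = carrier_matD[OF stab_list_carrier[OF SL TK]] carrier_matD[OF stab_list_carrier[OF SL T'K']]
    carrier_matD[OF herm_pauli_carrier[OF S]]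
  have "(T * T') * S = - ((T * S) * T')"
    using True dims unfolding anticommute_def by (simp add: assoc_mult_mat_dim)
  also have "\<dots> = S * (T * T')"
    using TS dims unfolding anticommute_def by (simp add: assoc_mult_mat_dim)
  finally show ?thesis using True by (simp add: anticomm_update_fst)
next
  case False
  thus ?thesis using herm_pauli_commute_if_not_anticommute[OF stab_list_herm_pauli[OF SL T'K'] S]
    by (simp add: anticomm_update_fst)
qed

lemma anticomm_update_commute_stabilizers:
  assumes T'K': "(T', K') \<in> set SL" and T''K'': "(T'', K'') \<in> set SL"
  shows "fst (anticomm_update T K S (T', K')) * T'' = T'' * fst (anticomm_update T K S (T', K'))"
  using commute_mult_mat[OF stab_list_carrier[OF SL T''K''] stab_list_carrier[OF SL TK]
      stab_list_carrier[OF SL T'K'] stab_list_commute[OF SL T''K'' TK] stab_list_commute[OF SL T''K'' T'K']]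
    stab_list_commute[OF SL T'K' T''K'']
  by (simp add: anticomm_update_fst)

lemma anticomm_update_commute:
  assumes q1: "q1 \<in> set SL" and q2: "q2 \<in> set SL"
  shows "fst (anticomm_update T K S q1) * fst (anticomm_update T K S q2) =
    fst (anticomm_update T K S q2) * fst (anticomm_update T K S q1)"
proof -
  obtain T1 K1 T2 K2 where q: "q1 = (T1, K1)" "q2 = (T2, K2)" by force
  define A where "A = fst (anticomm_update T K S q1)"
  have A: "A \<in> CM n" unfolding A_def q
    using herm_pauli_carrier[OF anticomm_update_herm_pauli] q1 q by simp
  have "A * T = T * A" and AT2: "A * T2 = T2 * A"
    unfolding A_def q using anticomm_update_commute_stabilizers q1 q2 TK q by simp_all
  hence "A * (T * T2) = (T * T2) * A"
    using commute_mult_mat[OF A stab_list_carrier[OF SL TK] stab_list_carrier[OF SL q2[unfolded q(2)]]] by simp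
  moreover have "fst (anticomm_update T K S q2) = T2 \<or> fst (anticomm_update T K S q2) = T * T2"
    by (simp add: q anticomm_update_fst)
  ultimately show ?thesis using AT2 unfolding A_def[symmetric] by auto
qed

lemma anticomm_update_stabilized:
  assumes M: "M \<in> CM n" and stab: "stabilizes w SL M" and T'K': "(T', K') \<in> set SL"
  shows "fst (anticomm_update T K S (T', K')) * M = outcome_sign w (snd (anticomm_update T K S (T', K'))) \<cdot>\<^sub>m M"
proof -
  have TM: "T * M = outcome_sign w K \<cdot>\<^sub>m M" and T'M: "T' * M = outcome_sign w K' \<cdot>\<^sub>m M"
    using stab TK T'K' unfolding stabilizes_def by auto
  note dims = carrier_matD[OF stab_list_carrier[OF SL TK]] carrier_matD[OF stab_list_carrier[OF SL T'K']]
    carrier_matD[OF M]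
  have "T * T' * M = outcome_sign w (symd K K') \<cdot>\<^sub>m M"
    using TM T'M dims stab_list_finite[OF SL TK] stab_list_finite[OF SL T'K']
    by (simp add: mat_algebra_dim outcome_sign_symd ac_simps)
  thus ?thesis using T'M by (simp add: anticomm_update_fst anticomm_update_snd)
qed

lemma anticomm_update_stabilizes:
  assumes M: "M \<in> CM n" and stab: "stabilizes w SL M" and L: "set L \<subseteq> set SL"
  shows "stabilizes w (map (anticomm_update T K S) L) M"
proof -
  have "\<forall>q\<in>set L. fst (anticomm_update T K S q) * M = outcome_sign w (snd (anticomm_update T K S q)) \<cdot>\<^sub>m M"
    using anticomm_update_stabilized[OF M stab] L by auto
  thus ?thesis unfolding stabilizes_def by (auto simp: case_prod_beta)
qed

end

lemma stab_list_anticomm_update: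
  assumes SL: "stab_list n SL" and S: "herm_pauli n S" and i: "i < length SL" and Ti: "SL ! i = (T, K)"
    and TS: "anticommute T S"
  shows "stab_list n (map (anticomm_update T K S) (take i SL @ drop (Suc i) SL) @ [(S, {j})])"
proof (rule stab_list_snoc[OF S])
  have TK: "(T, K) \<in> set SL" using i Ti nth_mem by metis
  have rest: "set (take i SL @ drop (Suc i) SL) \<subseteq> set SL" by (auto dest: in_set_takeD in_set_dropD)
  have herm: "herm_pauli n (fst (anticomm_update T K S q)) \<and> finite (snd (anticomm_update T K S q))"
    if "q \<in> set SL" for q
    using that anticomm_update_herm_pauli[OF SL TK S TS] anticomm_update_finite[OF SL TK S TS]
    by (metis prod.collapse)
  have measured: "fst (anticomm_update T K S q) * S = S * fst (anticomm_update T K S q)"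
    if "q \<in> set SL" for q
    using that anticomm_update_commute_measured[OF SL TK S TS] by (metis prod.collapse)
  note comm = anticomm_update_commute[OF SL TK S TS]
  show "stab_list n (map (anticomm_update T K S) (take i SL @ drop (Suc i) SL))"
    unfolding stab_list_def commuting_paulis_def using rest herm comm
    by (auto simp: case_prod_beta subset_iff)
  show "\<forall>(T', K')\<in>set (map (anticomm_update T K S) (take i SL @ drop (Suc i) SL)). T' * S = S * T'"
    using rest measured by (auto simp: case_prod_beta)
qed

lemma stabilizes_anticomm_update:
  assumes SL: "stab_list n SL" and S: "herm_pauli n S" and i: "i < length SL" and Ti: "SL ! i = (T, K)"
    and TS: "anticommute T S" and M: "M \<in> CM n" and stab: "stabilizes w SL M"
  shows "stabilizes w (map (anticomm_update T K S) (take i SL @ drop (Suc i) SL) @ [(S, {j})])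
    (projector n S (w j) * M)"
proof (rule stabilizes_snoc_projector[OF S M])
  have TK: "(T, K) \<in> set SL" using i Ti nth_mem by metis
  have rest: "set (take i SL @ drop (Suc i) SL) \<subseteq> set SL" by (auto dest: in_set_takeD in_set_dropD)
  show "stabilizes w (map (anticomm_update T K S) (take i SL @ drop (Suc i) SL)) M"
    by (rule anticomm_update_stabilizes[OF SL TK S TS M stab rest])
  show "\<forall>(T', K')\<in>set (map (anticomm_update T K S) (take i SL @ drop (Suc i) SL)). T' \<in> CM n \<and> T' * S = S * T'"
    using rest herm_pauli_carrier[OF anticomm_update_herm_pauli[OF SL TK S TS]]
      anticomm_update_commute_measured[OF SL TK S TS]
    by (auto simp: case_prod_beta)
qed

lemma stab_prod_eq_stab_factor_mult_update:
  assumes SL: "stab_list n SL" and i: "i < length SL" and Ti: "SL ! i = (T, K)"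
  shows "stab_prod n w SL =
    stab_factor n w (T, K) * stab_prod n w (map (anticomm_update T K S) (take i SL @ drop (Suc i) SL))"
proof -
  have TK: "(T, K) \<in> set SL" using i Ti nth_mem by metis
  have "set (take i SL @ drop (Suc i) SL) \<subseteq> set SL" by (auto dest: in_set_takeD in_set_dropD)
  thus ?thesis
    unfolding stab_prod_remove_nth[OF SL i] Ti
    using stab_list_carrier[OF SL] stab_list_finite[OF SL] stab_list_commute[OF SL TK]
    by (intro stab_factor_mult_stab_prod_absorb[OF stab_list_carrier[OF SL TK] stab_list_square[OF SL TK]
          stab_list_finite[OF SL TK]]) auto
qed

text \<open>Write the old product as Q = F * R, with F the factor of the removed T and R the
  product of the updated list, which commutes with the new projector P. As T anticommutes
  with S, P * F * P = P, so the new product 2 * R * P equals 2 * P * Q * P: its range lies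
  in that of P * M, and its trace is that of Q because trace (S * Q) = 0.\<close>
lemma code_in_range_anticomm_update:
  assumes SL: "stab_list n SL" and S: "herm_pauli n S" and i: "i < length SL" and Ti: "SL ! i = (T, K)"
    and TS: "anticommute T S" and M: "M \<in> CM n" and inv: "code_in_range n w SL M"
  shows "code_in_range n w (map (anticomm_update T K S) (take i SL @ drop (Suc i) SL) @ [(S, {j})])
    (projector n S (w j) * M)"
proof -
  define rest where "rest = take i SL @ drop (Suc i) SL"
  have rest: "set rest \<subseteq> set SL" unfolding rest_def by (auto dest: in_set_takeD in_set_dropD)
  have TK: "(T, K) \<in> set SL" using i Ti nth_mem by metis
  obtain X where X: "X \<in> CM n" and QX: "stab_prod n w SL = M * X" and tr: "trace (stab_prod n w SL) \<noteq> 0"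
    using inv unfolding code_in_range_def by blast
  have Sc: "S \<in> CM n" and SS: "S * S = 1\<^sub>m (2^n)" using S herm_pauli_carrier herm_pauli_square by auto
  have Tc: "T \<in> CM n" using stab_list_carrier[OF SL TK] .
  define p where "p = (if w j then -1 else 1 :: complex)"
  have pp: "p * p = 1" unfolding p_def by simp
  define P where "P = eig_proj n S p"
  define Q where "Q = stab_prod n w SL"
  define F where "F = stab_factor n w (T, K)"
  define R where "R = stab_prod n w (map (anticomm_update T K S) rest)"
  have upd_carrier: "\<forall>(T', K')\<in>set (map (anticomm_update T K S) rest). T' \<in> CM n"
    using rest herm_pauli_carrier[OF anticomm_update_herm_pauli[OF SL TK S TS]] by (auto simp: case_prod_beta)
  have P: "P \<in> CM n" unfolding P_def using eig_proj_carrier[OF Sc] .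
  have Q: "Q \<in> CM n" unfolding Q_def using stab_list_carrier[OF SL] by (intro stab_prod_carrier) auto
  have F: "F \<in> CM n" unfolding F_def using stab_factor_carrier[OF Tc] .
  have R: "R \<in> CM n" unfolding R_def using upd_carrier by (rule stab_prod_carrier)
  note dims = carrier_matD[OF P] carrier_matD[OF Q] carrier_matD[OF F] carrier_matD[OF R]
    carrier_matD[OF M] carrier_matD[OF X]
  have "S * R = R * S"
    unfolding R_def using upd_carrier rest anticomm_update_commute_measured[OF SL TK S TS]
    by (intro commute_stab_prod[OF Sc]) (auto simp: case_prod_beta)
  hence RP: "R * P = P * R" unfolding P_def by (rule commute_eig_proj[OF Sc R sym, symmetric])
  have QFR: "Q = F * R"
    unfolding Q_def F_def R_def rest_def by (rule stab_prod_eq_stab_factor_mult_update[OF SL i Ti])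
  have "P * (Q * P) = P * (F * (P * R))" unfolding QFR RP[symmetric] using dims by (simp add: assoc_mult_mat_dim)
  also have "\<dots> = (P * (F * P)) * R" using dims by (simp add: assoc_mult_mat_dim)
  finally have PQP: "P * (Q * P) = P * R"
    unfolding P_def F_def eig_proj_stab_factor_eig_proj[OF Sc SS pp Tc TS[unfolded anticommute_def]] .
  have "stab_prod n w (map (anticomm_update T K S) rest @ [(S, {j})]) = R * (2 \<cdot>\<^sub>m P)"
    unfolding R_def P_def p_def using stab_prod_append[OF upd_carrier, of "[(S, {j})]"] Sc
      carrier_matD[OF projector_carrier[OF Sc]]
    by (simp add: stab_prod_Cons stab_factor_singleton projector_eq_eig_proj)
  also have "\<dots> = 2 \<cdot>\<^sub>m (P * (Q * P))" unfolding PQP RP[symmetric] using dims by (simp add: mat_algebra_dim)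
  finally have new: "stab_prod n w (map (anticomm_update T K S) rest @ [(S, {j})]) = 2 \<cdot>\<^sub>m (P * (Q * P))" .
  have "2 \<cdot>\<^sub>m (P * (Q * P)) = (P * M) * (2 \<cdot>\<^sub>m (X * P))"
    unfolding Q_def QX using dims by (simp add: mat_algebra_dim)
  moreover have "2 \<cdot>\<^sub>m (X * P) \<in> CM n" using X P by simp
  moreover have "trace (2 \<cdot>\<^sub>m (P * (Q * P))) = trace Q"
    using P Q trace_pauli_mult_stab_prod_anticommuting[OF SL TK Sc TS]
    by (simp add: trace_smult[of _ "2^n"] P_def Q_def trace_eig_proj_sandwich[OF Sc SS pp Q[unfolded Q_def]])
  ultimately show ?thesis
    unfolding code_in_range_def rest_def[symmetric] new P_def p_def projector_eq_eig_proj
    using tr unfolding Q_def by auto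
qed

section \<open>Kraus operators\<close>

lemma clifford_circuit_Cons: "clifford_circuit n (op # C) \<longleftrightarrow> clifford_circuit n [op] \<and> clifford_circuit n C"
  unfolding clifford_circuit_def by auto

fun step_op :: "nat \<Rightarrow> operation \<Rightarrow> (nat \<Rightarrow> bool) \<Rightarrow> nat \<Rightarrow> complex mat" where
  "step_op n (Gate U) w j = U"
| "step_op n (Meas S) w j = projector n S (w j)"

lemma step_op_carrier: "clifford_circuit n [op] \<Longrightarrow> step_op n op w j \<in> CM n"
proof (cases op)
  case (Gate U)
  thus "clifford_circuit n [op] \<Longrightarrow> ?thesis"
    using unitary_carrier[OF clifford_gate_unitary] unfolding clifford_circuit_def by auto
next
  case (Meas S)
  thus "clifford_circuit n [op] \<Longrightarrow> ?thesis"
    using projector_carrier[OF herm_pauli_carrier] unfolding clifford_circuit_def by auto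
qed

lemma kraus_carrier: "clifford_circuit n C \<Longrightarrow> kraus n C j w \<in> CM n"
proof (induction C arbitrary: j)
  case (Cons op C)
  hence "clifford_circuit n [op]" "clifford_circuit n C" using clifford_circuit_Cons by blast+
  thus ?case using Cons.IH step_op_carrier[of n op w j] by (cases op) (auto intro: mult_carrier_mat)
qed simp

lemma kraus_Gate_mult:
  "clifford_circuit n C \<Longrightarrow> U \<in> CM n \<Longrightarrow> M \<in> CM n \<Longrightarrow> kraus n (Gate U # C) j w * M = kraus n C j w * (U * M)"
  using carrier_matD[OF kraus_carrier, of n C j w] carrier_matD[of U] carrier_matD[of M]
  by (simp add: assoc_mult_mat_dim)

lemma kraus_Meas_mult:
  "clifford_circuit n C \<Longrightarrow> S \<in> CM n \<Longrightarrow> M \<in> CM n \<Longrightarrow>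
    kraus n (Meas S # C) j w * M = kraus n C (Suc j) w * (projector n S (w j) * M)"
  using carrier_matD[OF kraus_carrier, of n C "Suc j" w] carrier_matD[OF projector_carrier, of S n "w j"]
    carrier_matD[of M]
  by (simp add: assoc_mult_mat_dim)

lemma kraus_cong: "\<forall>k\<ge>j. w k = w' k \<Longrightarrow> kraus n C j w = kraus n C j w'"
proof (induction C arbitrary: j)
  case (Cons op C)
  thus ?case by (cases op) auto
qed simp

lemma unitary_mult_nonzero:
  assumes U: "unitary_n n U" and M: "M \<in> CM n" and nonzero: "M \<noteq> 0\<^sub>m (2^n) (2^n)"
  shows "U * M \<noteq> 0\<^sub>m (2^n) (2^n)"
proof
  assume "U * M = 0\<^sub>m (2^n) (2^n)"
  hence "mat_adjoint U * (U * M) = 0\<^sub>m (2^n) (2^n)"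
    using right_mult_zero_mat[OF conjunct2[OF unitary_carrier[OF U]]] by simp
  thus False using unitary_adjoint_cancel[OF U] carrier_matD[OF M] nonzero by simp
qed

lemma exists_projector_mult_nonzero:
  assumes S: "S \<in> CM n" and M: "M \<in> CM n" and nonzero: "M \<noteq> 0\<^sub>m (2^n) (2^n)"
  shows "\<exists>b. projector n S b * M \<noteq> 0\<^sub>m (2^n) (2^n)"
proof (rule ccontr)
  assume "\<not> ?thesis"
  hence "projector n S False * M = 0\<^sub>m (2^n) (2^n)" "projector n S True * M = 0\<^sub>m (2^n) (2^n)" by auto
  hence "eig_proj n S 1 * M + eig_proj n S (-1) * M = 0\<^sub>m (2^n) (2^n)"
    unfolding projector_eq_eig_proj by simp
  moreover have "eig_proj n S 1 * M + eig_proj n S (-1) * M = M"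
    using eig_proj_add[OF S] carrier_matD[OF eig_proj_carrier[OF S]] carrier_matD[OF M]
    by (simp flip: add_mult_mat_dim)
  ultimately show False using nonzero by simp
qed

lemma exists_kraus_mult_nonzero:
  "clifford_circuit n C \<Longrightarrow> M \<in> CM n \<Longrightarrow> M \<noteq> 0\<^sub>m (2^n) (2^n) \<Longrightarrow>
   \<exists>w. (\<forall>k. k < j \<or> j + num_meas C \<le> k \<longrightarrow> \<not> w k) \<and> kraus n C j w * M \<noteq> 0\<^sub>m (2^n) (2^n)"
proof (induction C arbitrary: j M)
  case Nil
  thus ?case using carrier_matD[OF Nil.prems(2)] by (intro exI[of _ "\<lambda>_. False"]) simp
next
  case (Cons op C)
  have C: "clifford_circuit n C" using Cons.prems(1) clifford_circuit_Cons by blast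
  show ?case
  proof (cases op)
    case (Gate U)
    have U: "unitary_n n U" using Cons.prems(1) Gate unfolding clifford_circuit_def clifford_gate_def by auto
    note Uc = conjunct1[OF unitary_carrier[OF U]]
    obtain w where "\<forall>k. k < j \<or> j + num_meas C \<le> k \<longrightarrow> \<not> w k" "kraus n C j w * (U * M) \<noteq> 0\<^sub>m (2^n) (2^n)"
      using Cons.IH[OF C mult_carrier_mat[OF Uc Cons.prems(2)] unitary_mult_nonzero[OF U Cons.prems(2,3)]]
      by blast
    thus ?thesis using Gate kraus_Gate_mult[OF C Uc Cons.prems(2)] by auto
  next
    case (Meas S)
    have S: "S \<in> CM n" using Cons.prems(1) Meas herm_pauli_carrier unfolding clifford_circuit_def by auto
    obtain b where b: "projector n S b * M \<noteq> 0\<^sub>m (2^n) (2^n)"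
      using exists_projector_mult_nonzero[OF S Cons.prems(2,3)] ..
    obtain w where w: "\<forall>k. k < Suc j \<or> Suc j + num_meas C \<le> k \<longrightarrow> \<not> w k"
      "kraus n C (Suc j) w * (projector n S b * M) \<noteq> 0\<^sub>m (2^n) (2^n)"
      using Cons.IH[OF C mult_carrier_mat[OF projector_carrier[OF S] Cons.prems(2)] b] by blast
    define w' where "w' = w(j := b)"
    have "kraus n C (Suc j) w' = kraus n C (Suc j) w" unfolding w'_def by (rule kraus_cong) simp
    hence "kraus n (op # C) j w' * M \<noteq> 0\<^sub>m (2^n) (2^n)"
      using w(2) Meas kraus_Meas_mult[OF C S Cons.prems(2), of j w'] by (simp add: w'_def)
    moreover have "\<forall>k. k < j \<or> j + num_meas (op # C) \<le> k \<longrightarrow> \<not> w' k"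
      using w(1) Meas unfolding w'_def by auto
    ultimately show ?thesis by blast
  qed
qed

lemma outcome_set_iff_kraus_nonzero:
  assumes C: "clifford_circuit n C"
  shows "w \<in> outcome_set n C \<longleftrightarrow> w \<in> bitstrings (num_meas C) \<and> kraus n C 0 w \<noteq> 0\<^sub>m (2^n) (2^n)"
proof -
  have K: "kraus n C 0 w \<in> CM n" by (rule kraus_carrier[OF C])
  have "(\<exists>psi. psi \<in> carrier_vec (2^n) \<and> vnorm2 psi = 1 \<and> outcome_prob n C w psi \<noteq> 0) \<longleftrightarrow>
      kraus n C 0 w \<noteq> 0\<^sub>m (2^n) (2^n)"
  proof
    assume "\<exists>psi. psi \<in> carrier_vec (2^n) \<and> vnorm2 psi = 1 \<and> outcome_prob n C w psi \<noteq> 0"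
    then obtain psi where "psi \<in> carrier_vec (2^n)" "outcome_prob n C w psi \<noteq> 0" by blast
    thus "kraus n C 0 w \<noteq> 0\<^sub>m (2^n) (2^n)"
      unfolding outcome_prob_def vnorm2_def by (auto simp: scalar_prod_def)
  next
    assume nz: "kraus n C 0 w \<noteq> 0\<^sub>m (2^n) (2^n)"
    have "\<exists>r c. r < 2^n \<and> c < 2^n \<and> kraus n C 0 w $$ (r, c) \<noteq> 0"
    proof (rule ccontr)
      assume "\<not> ?thesis"
      hence "kraus n C 0 w = 0\<^sub>m (2^n) (2^n)" using K by (intro eq_matI) auto
      thus False using nz by simp
    qed
    then obtain r c where rc: "r < 2^n" "c < 2^n" "kraus n C 0 w $$ (r, c) \<noteq> 0" by blast
    define psi where "psi = (unit_vec (2^n) c :: complex vec)"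
    have "vnorm2 psi = (\<Sum>i<2^n. if i = c then 1 else 0)"
      unfolding vnorm2_def psi_def using rc(2) by (intro sum.cong) auto
    hence norm: "vnorm2 psi = 1" using rc(2) by simp
    have "(kraus n C 0 w *\<^sub>v psi) $ r = kraus n C 0 w $$ (r, c)"
      unfolding psi_def using K rc by simp
    hence "0 < (cmod ((kraus n C 0 w *\<^sub>v psi) $ r))\<^sup>2" using rc(3) by simp
    also have "\<dots> \<le> outcome_prob n C w psi"
      unfolding outcome_prob_def vnorm2_def using K rc by (intro member_le_sum) auto
    finally have "outcome_prob n C w psi \<noteq> 0" by simp
    moreover have "psi \<in> carrier_vec (2^n)" unfolding psi_def by simp
    ultimately show "\<exists>psi. psi \<in> carrier_vec (2^n) \<and> vnorm2 psi = 1 \<and> outcome_prob n C w psi \<noteq> 0"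
      using norm by blast
  qed
  thus ?thesis unfolding outcome_set_def by blast
qed

section \<open>Runs of the algorithm\<close>

lemma herm_pauli_of_clifford_circuit: "clifford_circuit n [Meas S] \<Longrightarrow> herm_pauli n S"
  unfolding clifford_circuit_def by simp

lemma clifford_gate_of_clifford_circuit: "clifford_circuit n [Gate U] \<Longrightarrow> clifford_gate n U"
  unfolding clifford_circuit_def by simp

lemma commute_if_none_anticommute:
  assumes SL: "stab_list n SL" and S: "herm_pauli n S" and none: "\<forall>T\<in>set (map fst SL). \<not> anticommute T S"
  shows "\<forall>(T, K)\<in>set SL. T * S = S * T"
proof (clarify)
  fix T K assume TK: "(T, K) \<in> set SL"
  hence "\<not> anticommute T S" using none by force
  thus "T * S = S * T" by (rule herm_pauli_commute_if_not_anticommute[OF stab_list_herm_pauli[OF SL TK] S])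
qed

lemma alg_step_stab_list:
  assumes step: "alg_step n (SL, R, j) op (SL', R', j')" and op: "clifford_circuit n [op]"
    and SL: "stab_list n SL"
  shows "stab_list n SL'"
  using step
proof (cases rule: alg_step.cases)
  case (gate U)
  thus ?thesis using stab_list_conjugate[OF _ SL] op clifford_gate_of_clifford_circuit by simp
next
  case (meas_b1 S i T K)
  thus ?thesis using stab_list_anticomm_update[OF SL _ meas_b1(6-8)] op herm_pauli_of_clifford_circuit
    by (simp add: anticomm_update_def)
next
  case (meas_b2 S)
  thus ?thesis
    using stab_list_snoc[OF _ SL commute_if_none_anticommute[OF SL]] op herm_pauli_of_clifford_circuit by simp
qed (use SL in simp)

lemma alg_step_sound:
  assumes step: "alg_step n (SL, R, j) op (SL', R', j')" and op: "clifford_circuit n [op]"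
    and SL: "stab_list n SL" and M: "M \<in> CM n" and stab: "stabilizes w SL M"
    and nonzero: "step_op n op w j * M \<noteq> 0\<^sub>m (2^n) (2^n)"
  shows "stabilizes w SL' (step_op n op w j * M) \<and> (\<forall>e\<in>set R' - set R. sat_eq w e)"
  using step
proof (cases rule: alg_step.cases)
  case (gate U)
  thus ?thesis using stabilizes_conjugate[OF _ SL M stab] op clifford_gate_of_clifford_circuit
      clifford_gate_unitary by simp
next
  case (meas_a S \<epsilon> I)
  have S: "S \<in> CM n" using op meas_a herm_pauli_of_clifford_circuit herm_pauli_carrier by simp
  note determined = projector_mult_in_group[OF SL S M stab meas_a(6,8), of j]
  thus ?thesis using meas_a nonzero stab by (auto split: if_splits)
next
  case (meas_b1 S i T K)
  thus ?thesis using stabilizes_anticomm_update[OF SL _ meas_b1(6-8) M stab] op herm_pauli_of_clifford_circuit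
    by (simp add: anticomm_update_def)
next
  case (meas_b2 S)
  have S: "herm_pauli n S" using op meas_b2 herm_pauli_of_clifford_circuit by simp
  thus ?thesis using meas_b2 stabilizes_snoc_projector[OF S M stab] commute_if_none_anticommute[OF SL S]
      stab_list_carrier[OF SL] by fastforce
qed

lemma alg_step_complete:
  assumes step: "alg_step n (SL, R, j) op (SL', R', j')" and op: "clifford_circuit n [op]"
    and SL: "stab_list n SL" and M: "M \<in> CM n" and inv: "code_in_range n w SL M"
    and sat: "\<forall>e\<in>set R'. sat_eq w e"
  shows "code_in_range n w SL' (step_op n op w j * M)"
  using step
proof (cases rule: alg_step.cases)
  case (gate U)
  thus ?thesis using code_in_range_conjugate[OF _ SL M inv] op clifford_gate_of_clifford_circuit
      clifford_gate_unitary by simp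
next
  case (meas_a S \<epsilon> I)
  have S: "S \<in> CM n" using op meas_a herm_pauli_of_clifford_circuit herm_pauli_carrier by simp
  thus ?thesis using code_in_range_in_group[OF SL S M inv meas_a(6,8)] meas_a sat by simp
next
  case (meas_b1 S i T K)
  thus ?thesis using code_in_range_anticomm_update[OF SL _ meas_b1(6-8) M inv] op herm_pauli_of_clifford_circuit
    by (simp add: anticomm_update_def)
next
  case (meas_b2 S)
  have S: "herm_pauli n S" using op meas_b2 herm_pauli_of_clifford_circuit by simp
  thus ?thesis using meas_b2 code_in_range_snoc[OF SL S commute_if_none_anticommute[OF SL S] _ M inv]
    by simp
qed

lemma alg_step_exists:
  assumes SL: "stab_list n SL"
  shows "\<exists>SL' R' j'. alg_step n (SL, R, j) op (SL', R', j')"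
proof (cases op)
  case (Gate U)
  thus ?thesis using alg_step.gate by blast
next
  case (Meas S)
  show ?thesis
  proof (cases "S \<in> gen_group n (map fst SL) \<or> - S \<in> gen_group n (map fst SL)")
    case in_group: True
    have "commuting_paulis n (map fst SL)" using SL unfolding stab_list_def by simp
    then obtain \<epsilon> I where "\<epsilon> = 1 \<or> \<epsilon> = -1" "I \<subseteq> {..<length SL}" "\<epsilon> \<cdot>\<^sub>m S = prod_mats n (map fst (nths SL I))"
      using signed_gen_group_eq_prod_mats_nths[OF in_group] by (auto simp: nths_map)
    thus ?thesis using alg_step.meas_a[OF in_group] Meas by blast
  next
    case not_in_group: False
    show ?thesis
    proof (cases "\<exists>T\<in>set (map fst SL). anticommute T S")
      case True
      then obtain i where i: "i < length SL" "anticommute (fst (SL ! i)) S"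
        by (auto simp: in_set_conv_nth)
      have "SL ! i = (fst (SL ! i), snd (SL ! i))" by simp
      from alg_step.meas_b1[OF not_in_group i(1) this i(2), of R j] show ?thesis using Meas by blast
    next
      case False
      thus ?thesis using alg_step.meas_b2[OF not_in_group] Meas by blast
    qed
  qed
qed

lemma alg_step_equations_mono:
  assumes "alg_step n (SL, R, j) op (SL', R', j')"
  shows "set R \<subseteq> set R'"
  using assms by (cases rule: alg_step.cases) (simp_all add: subset_insertI)

lemma alg_step_kraus_mult:
  assumes step: "alg_step n (SL, R, j) op (SL', R', j')" and C: "clifford_circuit n (op # C)" and M: "M \<in> CM n"
  shows "kraus n (op # C) j w * M = kraus n C j' w * (step_op n op w j * M)"
proof -
  have op: "clifford_circuit n [op]" and C': "clifford_circuit n C" using C clifford_circuit_Cons by blast+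
  show ?thesis
    using step
  proof (cases rule: alg_step.cases)
    case (gate U)
    thus ?thesis using kraus_Gate_mult[OF C' _ M] step_op_carrier[OF op, of w j] by simp
  next
    case (meas_a S)
    thus ?thesis using kraus_Meas_mult[OF C' _ M] op herm_pauli_of_clifford_circuit herm_pauli_carrier by simp
  next
    case (meas_b1 S)
    thus ?thesis using kraus_Meas_mult[OF C' _ M] op herm_pauli_of_clifford_circuit herm_pauli_carrier by simp
  next
    case (meas_b2 S)
    thus ?thesis using kraus_Meas_mult[OF C' _ M] op herm_pauli_of_clifford_circuit herm_pauli_carrier by simp
  qed
qed

lemma alg_run_equations_mono: "alg_run n (SL, R, j) C Rf \<Longrightarrow> set R \<subseteq> set Rf"
proof (induction "(SL, R, j)" C Rf arbitrary: SL R j rule: alg_run.induct)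
  case (run_cons op st' C Rf)
  obtain SL' R' j' where st': "st' = (SL', R', j')" by (cases st')
  have "set R \<subseteq> set R'" using alg_step_equations_mono run_cons.hyps(1)[unfolded st'] .
  also have "set R' \<subseteq> set Rf" using run_cons.hyps(3)[OF st'] .
  finally show ?case .
qed simp

lemma alg_run_sound:
  "alg_run n (SL, R, j) C Rf \<Longrightarrow> clifford_circuit n C \<Longrightarrow> stab_list n SL \<Longrightarrow> M \<in> CM n \<Longrightarrow>
    stabilizes w SL M \<Longrightarrow> kraus n C j w * M \<noteq> 0\<^sub>m (2^n) (2^n) \<Longrightarrow> \<forall>e\<in>set R. sat_eq w e \<Longrightarrow>
    \<forall>e\<in>set Rf. sat_eq w e"
proof (induction "(SL, R, j)" C Rf arbitrary: SL R j M rule: alg_run.induct)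
  case (run_cons op st' C Rf)
  obtain SL' R' j' where st': "st' = (SL', R', j')" by (cases st')
  note step = run_cons.hyps(1)[unfolded st']
  have op: "clifford_circuit n [op]" and C: "clifford_circuit n C"
    using run_cons.prems(1) clifford_circuit_Cons by blast+
  have E: "step_op n op w j * M \<in> CM n" using mult_carrier_mat[OF step_op_carrier[OF op] run_cons.prems(3)] .
  have nonzero: "kraus n C j' w * (step_op n op w j * M) \<noteq> 0\<^sub>m (2^n) (2^n)"
    using run_cons.prems(5) alg_step_kraus_mult[OF step run_cons.prems(1,3)] by simp
  hence "step_op n op w j * M \<noteq> 0\<^sub>m (2^n) (2^n)"
    using right_mult_zero_mat[OF kraus_carrier[OF C]] by metis
  note sound = alg_step_sound[OF step op run_cons.prems(2,3,4) this]
  have "\<forall>e\<in>set R'. sat_eq w e" using sound run_cons.prems(6) by blast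
  thus ?case
    using run_cons.hyps(3)[OF st' C alg_step_stab_list[OF step op run_cons.prems(2)] E conjunct1[OF sound]
      nonzero] by blast
qed simp

lemma alg_run_complete:
  "alg_run n (SL, R, j) C Rf \<Longrightarrow> clifford_circuit n C \<Longrightarrow> stab_list n SL \<Longrightarrow> M \<in> CM n \<Longrightarrow>
    code_in_range n w SL M \<Longrightarrow> \<forall>e\<in>set Rf. sat_eq w e \<Longrightarrow> kraus n C j w * M \<noteq> 0\<^sub>m (2^n) (2^n)"
proof (induction "(SL, R, j)" C Rf arbitrary: SL R j M rule: alg_run.induct)
  case (run_nil SL R j)
  then obtain X where "X \<in> CM n" "trace (M * X) \<noteq> 0" unfolding code_in_range_def by auto
  thus ?case using run_nil.prems(3) trace_zero left_mult_zero_mat by auto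
next
  case (run_cons op st' C Rf)
  obtain SL' R' j' where st': "st' = (SL', R', j')" by (cases st')
  note step = run_cons.hyps(1)[unfolded st']
  have op: "clifford_circuit n [op]" and C: "clifford_circuit n C"
    using run_cons.prems(1) clifford_circuit_Cons by blast+
  have E: "step_op n op w j * M \<in> CM n" using mult_carrier_mat[OF step_op_carrier[OF op] run_cons.prems(3)] .
  have "set R' \<subseteq> set Rf" using alg_run_equations_mono run_cons.hyps(2)[unfolded st'] .
  hence "\<forall>e\<in>set R'. sat_eq w e" using run_cons.prems(5) by blast
  hence "code_in_range n w SL' (step_op n op w j * M)"
    by (rule alg_step_complete[OF step op run_cons.prems(2,3,4)])
  hence "kraus n C j' w * (step_op n op w j * M) \<noteq> 0\<^sub>m (2^n) (2^n)"
    by (rule run_cons.hyps(3)[OF st' C alg_step_stab_list[OF step op run_cons.prems(2)] E _ run_cons.prems(5)])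
  thus ?case using alg_step_kraus_mult[OF step run_cons.prems(1,3)] by simp
qed

lemma alg_run_exists: "clifford_circuit n C \<Longrightarrow> stab_list n SL \<Longrightarrow> \<exists>Rf. alg_run n (SL, R, j) C Rf"
proof (induction C arbitrary: SL R j)
  case Nil
  show ?case using alg_run.run_nil by blast
next
  case (Cons op C)
  have op: "clifford_circuit n [op]" and C: "clifford_circuit n C"
    using Cons.prems(1) clifford_circuit_Cons by blast+
  obtain SL' R' j' where step: "alg_step n (SL, R, j) op (SL', R', j')"
    using alg_step_exists[OF Cons.prems(2)] by blast
  obtain Rf where "alg_run n (SL', R', j') C Rf"
    using Cons.IH[OF C alg_step_stab_list[OF step op Cons.prems(2)]] by blast
  thus ?case using alg_run.run_cons[OF step] by blast
qed

section \<open>The set of possible outcomes\<close>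

lemma outcome_set_eq_solutions:
  assumes C: "clifford_circuit n C" and R: "outcome_code n C R"
  shows "outcome_set n C = {w \<in> bitstrings (num_meas C). \<forall>e\<in>set R. sat_eq w e}"
proof -
  have run: "alg_run n ([], [], 0) C R" using R unfolding outcome_code_def .
  have one: "1\<^sub>m (2^n) \<in> CM n" by simp
  have kraus: "kraus n C 0 w * 1\<^sub>m (2^n) = kraus n C 0 w" for w
    using right_mult_one_mat[OF kraus_carrier[OF C]] .
  have "kraus n C 0 w \<noteq> 0\<^sub>m (2^n) (2^n) \<longleftrightarrow> (\<forall>e\<in>set R. sat_eq w e)" for w
  proof
    assume "kraus n C 0 w \<noteq> 0\<^sub>m (2^n) (2^n)"
    thus "\<forall>e\<in>set R. sat_eq w e"
      using alg_run_sound[OF run C stab_list_Nil one] kraus unfolding stabilizes_def by simp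
  next
    assume "\<forall>e\<in>set R. sat_eq w e"
    moreover have "code_in_range n w [] (1\<^sub>m (2^n))"
      unfolding code_in_range_def by (auto simp: trace_one intro!: bexI[of _ "1\<^sub>m (2^n)"])
    ultimately show "kraus n C 0 w \<noteq> 0\<^sub>m (2^n) (2^n)"
      using alg_run_complete[OF run C stab_list_Nil one] kraus by simp
  qed
  thus ?thesis using outcome_set_iff_kraus_nonzero[OF C] by blast
qed

lemma outcome_set_nonempty:
  assumes C: "clifford_circuit n C"
  shows "outcome_set n C \<noteq> {}"
proof -
  have "(1\<^sub>m (2^n) :: complex mat) \<noteq> 0\<^sub>m (2^n) (2^n)"
  proof
    assume "(1\<^sub>m (2^n) :: complex mat) = 0\<^sub>m (2^n) (2^n)"
    hence "(1\<^sub>m (2^n) :: complex mat) $$ (0, 0) = 0\<^sub>m (2^n) (2^n) $$ (0, 0)" by simp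
    thus False by simp
  qed
  then obtain w where "\<forall>k. k < 0 \<or> 0 + num_meas C \<le> k \<longrightarrow> \<not> w k"
    and "kraus n C 0 w * 1\<^sub>m (2^n) \<noteq> 0\<^sub>m (2^n) (2^n)"
    using exists_kraus_mult_nonzero[OF C, of "1\<^sub>m (2^n)" 0] by auto
  hence "w \<in> outcome_set n C"
    using kraus_carrier[OF C] outcome_set_iff_kraus_nonzero[OF C] unfolding bitstrings_def by auto
  thus ?thesis by blast
qed

lemma sat_eq_iff_outcome_sign_bool: "sat_eq w (K, b) \<longleftrightarrow> outcome_sign w K = (if b then -1 else 1)"
  unfolding sat_eq_def outcome_sign_def parity_sign_def by (simp add: minus_one_power_iff)

lemma finite_true_bits: "z \<in> bitstrings m \<Longrightarrow> finite {k \<in> K. z k}"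
proof (rule finite_subset[of _ "{..<m}"])
  assume "z \<in> bitstrings m"
  thus "{k \<in> K. z k} \<subseteq> {..<m}" unfolding bitstrings_def using not_le by auto
qed simp

lemma outcome_sign_bxor:
  assumes "x \<in> bitstrings m" "y \<in> bitstrings m"
  shows "outcome_sign (bxor x y) K = outcome_sign x K * outcome_sign y K"
proof -
  have "{k \<in> K. bxor x y k} = sym_diff {k \<in> K. x k} {k \<in> K. y k}" unfolding bxor_def by auto
  thus ?thesis unfolding outcome_sign_def
    using parity_sign_sym_diff[OF finite_true_bits[OF assms(1)] finite_true_bits[OF assms(2)]] by simp
qed

lemma bxor_bitstrings: "x \<in> bitstrings m \<Longrightarrow> y \<in> bitstrings m \<Longrightarrow> bxor x y \<in> bitstrings m"
  unfolding bitstrings_def bxor_def by auto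

lemma sat_eq_bxor3:
  assumes "a \<in> bitstrings m" "u \<in> bitstrings m" "v \<in> bitstrings m"
    and "sat_eq a e" "sat_eq u e" "sat_eq v e"
  shows "sat_eq (bxor (bxor a u) v) e"
proof -
  obtain K b where e: "e = (K, b)" by force
  define c where "c = (if b then -1 else 1 :: complex)"
  have "outcome_sign a K = c" "outcome_sign u K = c" "outcome_sign v K = c"
    using assms(4-6) unfolding e c_def sat_eq_iff_outcome_sign_bool by simp_all
  moreover have "c * c * c = c" unfolding c_def by simp
  ultimately have "outcome_sign (bxor (bxor a u) v) K = c"
    using outcome_sign_bxor[OF bxor_bitstrings[OF assms(1,2)] assms(3)] outcome_sign_bxor[OF assms(1,2)]
    by simp
  thus ?thesis unfolding e c_def sat_eq_iff_outcome_sign_bool .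
qed

lemma affine_subspace2_solutions:
  assumes a: "a \<in> A" and A: "A = {w \<in> bitstrings m. \<forall>e\<in>set R. sat_eq w e}"
  shows "affine_subspace2 m A"
  unfolding affine_subspace2_def
proof (intro exI conjI)
  have ab: "a \<in> bitstrings m" using a A by auto
  show "a \<in> bitstrings m" by (rule ab)
  have bxor_cancel: "bxor x (bxor x y) = y" for x y unfolding bxor_def by auto
  show "linear_subspace2 m (bxor a ` A)"
    unfolding linear_subspace2_def
  proof (intro conjI ballI)
    show "bxor a ` A \<subseteq> bitstrings m" using A ab bxor_bitstrings by auto
    have "bxor a a = (\<lambda>_. False)" unfolding bxor_def by auto
    thus "(\<lambda>_. False) \<in> bxor a ` A" using a by force
    fix x y assume "x \<in> bxor a ` A" "y \<in> bxor a ` A"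
    then obtain u v where uv: "u \<in> A" "v \<in> A" "x = bxor a u" "y = bxor a v" by auto
    have "u \<in> bitstrings m" "v \<in> bitstrings m" using uv A by auto
    hence "bxor (bxor a u) v \<in> A"
      using uv a ab sat_eq_bxor3[of a m u v] bxor_bitstrings[OF bxor_bitstrings[OF ab]] unfolding A by simp
    moreover have "bxor x y = bxor a (bxor (bxor a u) v)" unfolding uv bxor_def by auto
    ultimately show "bxor x y \<in> bxor a ` A" by blast
  qed
  show "A = bxor a ` (bxor a ` A)" by (auto simp: bxor_cancel image_iff)
qed

theorem mainTheorem1:
  fixes n :: nat and C :: "operation list"
  assumes "clifford_circuit n C"
  shows "affine_subspace2 (num_meas C) (outcome_set n C) \<and>
         (\<exists>R. outcome_code n C R) \<and>
         (\<forall>R. outcome_code n C R \<longrightarrow>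
              outcome_set n C = {w \<in> bitstrings (num_meas C). \<forall>e\<in>set R. sat_eq w e})"
proof -
  obtain R where R: "outcome_code n C R"
    using alg_run_exists[OF assms stab_list_Nil] unfolding outcome_code_def by blast
  obtain w where "w \<in> outcome_set n C" using outcome_set_nonempty[OF assms] by blast
  hence "affine_subspace2 (num_meas C) (outcome_set n C)"
    using outcome_set_eq_solutions[OF assms R] by (intro affine_subspace2_solutions) auto
  thus ?thesis using R outcome_set_eq_solutions[OF assms] by blast
qed

end
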